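(* Let $n\ge 4$ and let $T$ be a triangulation of a regular $n$-gon with edges labeled $1,\dots,n$ in cyclic order, such that every triangle of $T$ has at least one side that is an edge of the $n$-gon. Then $d_T=1$.
   Context: For a finite set $A$ with $|A|\ge 3$, $M_{0,A}$ denotes the moduli space of configurations of $|A|$ distinct points on $\mathbb{P}^1_{\mathbb{C}}$ labeled by $A$, modulo Möbius transformations; it has dimension $|A|-3$, and for $S\subseteq A$ with $|S|\ge3$ there is a forgetful map $M_{0,A}\to M_{0,S}$. For $|S|=4$, $M_{0,S}\cong\mathbb{P}^1\setminus\{0,1,\infty\}$ via the cross-ratio. A diagonal $D$ of the $n$-gon touches exactly four edges (the two edges at each endpoint of $D$); let $S_D\subseteq[n]$ be this 4-element set. A triangulation $T$ is a choice of $n-3$ pairwise non-crossing diagonals, and $d_T$ is the degree (cardinality of a general fiber, $0$ if not dominant) of the product of forgetful maps $\pi_T:M_{0,[n]}\to\prod_{D\in T}M_{0,S_D}$. *)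

theory Defs
  imports Complex_Main
begin

text \<open>A point of P^1(C) is represented by a nonzero vector in C^2 (up to scaling).
  Two points coincide iff their 2x2 determinant vanishes.\<close>

definition det2 :: "complex \<times> complex \<Rightarrow> complex \<times> complex \<Rightarrow> complex" where
  "det2 u v = fst u * snd v - snd u * fst v"

definition conf :: "nat \<Rightarrow> (nat \<Rightarrow> complex \<times> complex) set" where
  "conf n = {p. (\<forall>i\<in>{1..n}. p i \<noteq> (0,0)) \<and>
                (\<forall>i\<in>{1..n}. \<forall>j\<in>{1..n}. i \<noteq> j \<longrightarrow> det2 (p i) (p j) \<noteq> 0)}"

text \<open>Two configurations are equivalent iff they differ by a Moebius transformation
  (an invertible 2x2 matrix acting on homogeneous coordinates, up to rescaling each point).\<close>

definition mobius_equiv :: "nat \<Rightarrow> ((nat \<Rightarrow> complex \<times> complex) \<times> (nat \<Rightarrow> complex \<times> complex)) set" where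
  "mobius_equiv n = {(p, q). p \<in> conf n \<and> q \<in> conf n \<and>
     (\<exists>a b c d :: complex. a * d - b * c \<noteq> 0 \<and>
        (\<exists>l :: nat \<Rightarrow> complex. \<forall>i\<in>{1..n}. l i \<noteq> 0 \<and>
            q i = (l i * (a * fst (p i) + b * snd (p i)), l i * (c * fst (p i) + d * snd (p i)))))}"

definition M0 :: "nat \<Rightarrow> (nat \<Rightarrow> complex \<times> complex) set set" where
  "M0 n = conf n // mobius_equiv n"

text \<open>Cross-ratio of four labelled points; it identifies M_{0,{a<b<c<d}} with P^1 minus {0,1,inf}.\<close>

definition crossratio :: "(nat \<Rightarrow> complex \<times> complex) \<Rightarrow> nat \<Rightarrow> nat \<Rightarrow> nat \<Rightarrow> nat \<Rightarrow> complex" where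
  "crossratio p a b c d =
     (det2 (p a) (p b) * det2 (p c) (p d)) / (det2 (p a) (p c) * det2 (p b) (p d))"

text \<open>Forgetful map to M_{0,S} for a 4-element set S of labels (listed increasingly).\<close>

definition cr_set :: "(nat \<Rightarrow> complex \<times> complex) \<Rightarrow> nat set \<Rightarrow> complex" where
  "cr_set p S = (case sorted_list_of_set S of [a, b, c, d] \<Rightarrow> crossratio p a b c d | _ \<Rightarrow> 0)"

text \<open>Vertices are 1..n in cyclic order; edge i joins vertex i and vertex i+1 (edge n joins n and 1).
  So the two edges at vertex u are edge (u-1) (edge n if u = 1) and edge u.\<close>

definition prev_edge :: "nat \<Rightarrow> nat \<Rightarrow> nat" where
  "prev_edge n u = (if u = 1 then n else u - 1)"

definition is_diagonal :: "nat \<Rightarrow> nat \<times> nat \<Rightarrow> bool" where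
  "is_diagonal n D = (case D of (u, v) \<Rightarrow>
      1 \<le> u \<and> u + 2 \<le> v \<and> v \<le> n \<and> \<not> (u = 1 \<and> v = n))"

text \<open>The four edges touched by a diagonal.\<close>

definition S_D :: "nat \<Rightarrow> nat \<times> nat \<Rightarrow> nat set" where
  "S_D n D = (case D of (u, v) \<Rightarrow> {prev_edge n u, u, prev_edge n v, v})"

definition crosses :: "nat \<times> nat \<Rightarrow> nat \<times> nat \<Rightarrow> bool" where
  "crosses D E = (case D of (a, b) \<Rightarrow> case E of (c, d) \<Rightarrow>
      (a < c \<and> c < b \<and> b < d) \<or> (c < a \<and> a < d \<and> d < b))"

definition is_triangulation :: "nat \<Rightarrow> (nat \<times> nat) set \<Rightarrow> bool" where
  "is_triangulation n T = (T \<subseteq> {D. is_diagonal n D} \<and> card T = n - 3 \<and>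
      (\<forall>D\<in>T. \<forall>E\<in>T. \<not> crosses D E))"

definition is_side :: "nat \<Rightarrow> nat \<Rightarrow> nat \<Rightarrow> bool" where
  "is_side n u v = ((1 \<le> u \<and> v = u + 1 \<and> v \<le> n) \<or> (u = 1 \<and> v = n))"

definition joined :: "nat \<Rightarrow> (nat \<times> nat) set \<Rightarrow> nat \<Rightarrow> nat \<Rightarrow> bool" where
  "joined n T u v = (is_side n u v \<or> (u, v) \<in> T)"

text \<open>Triangles of the triangulation: triples a<b<c of vertices pairwise joined by sides or
  diagonals of T (for a convex polygon these are exactly the faces).\<close>

definition triangles :: "nat \<Rightarrow> (nat \<times> nat) set \<Rightarrow> (nat \<times> nat \<times> nat) set" where
  "triangles n T = {(a, b, c). 1 \<le> a \<and> a < b \<and> b < c \<and> c \<le> n \<and>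
      joined n T a b \<and> joined n T b c \<and> joined n T a c}"

definition piT :: "nat \<Rightarrow> (nat \<times> nat) set \<Rightarrow> (nat \<Rightarrow> complex \<times> complex) \<Rightarrow> (nat \<times> nat \<Rightarrow> complex)" where
  "piT n T p = (\<lambda>D. if D \<in> T then cr_set p (S_D n D) else 0)"

text \<open>The target: product over D in T of M_{0,S_D} = C - {0,1}, coordinates indexed by T.\<close>

definition target :: "(nat \<times> nat) set \<Rightarrow> (nat \<times> nat \<Rightarrow> complex) set" where
  "target T = {y. (\<forall>D\<in>T. y D \<noteq> 0 \<and> y D \<noteq> 1) \<and> (\<forall>D. D \<notin> T \<longrightarrow> y D = 0)}"

definition fiber :: "nat \<Rightarrow> (nat \<times> nat) set \<Rightarrow> (nat \<times> nat \<Rightarrow> complex) \<Rightarrow> (nat \<Rightarrow> complex \<times> complex) set set" where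
  "fiber n T y = {C \<in> M0 n. \<exists>p\<in>C. piT n T p = y}"

inductive_set polyfun :: "(('i \<Rightarrow> complex) \<Rightarrow> complex) set" where
  pf_const: "(\<lambda>y. c) \<in> polyfun"
| pf_var: "(\<lambda>y. y i) \<in> polyfun"
| pf_add: "f \<in> polyfun \<Longrightarrow> g \<in> polyfun \<Longrightarrow> (\<lambda>y. f y + g y) \<in> polyfun"
| pf_mult: "f \<in> polyfun \<Longrightarrow> g \<in> polyfun \<Longrightarrow> (\<lambda>y. f y * g y) \<in> polyfun"

text \<open>A property holds for a general point of the target: it holds on a nonempty Zariski-open
  subset, namely outside the zero locus of a polynomial not vanishing identically on the target.\<close>

definition generically :: "(nat \<times> nat) set \<Rightarrow> ((nat \<times> nat \<Rightarrow> complex) \<Rightarrow> bool) \<Rightarrow> bool" where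
  "generically T P = (\<exists>f\<in>polyfun. (\<exists>y\<in>target T. f y \<noteq> 0) \<and>
      (\<forall>y\<in>target T. f y \<noteq> 0 \<longrightarrow> P y))"

text \<open>d_T: cardinality of a general fiber (0 if pi_T is not dominant).\<close>

definition degree_T :: "nat \<Rightarrow> (nat \<times> nat) set \<Rightarrow> nat" where
  "degree_T n T = (THE d. generically T (\<lambda>y. card (fiber n T y) = d))"

end

(* Order the diagonals of T so that each one after the first shares three of its four edges
   with an earlier one. Because every triangle has a polygon side, sorting the diagonals by the
   size of their side containing the free vertex of an ear does this. Counting then shows that each
   diagonal after the first meets exactly one new label: n - 3 diagonals must reach all n labels,
   starting from three labels of the first one.

   Normalize the points of those three labels to fixed positions. The cross-ratio prescribed on
   each S_D in turn determines the point at its new label, polynomially in the target coordinates.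
   So the fibre over y is at most the Moebius class of this rebuilt configuration, and is exactly
   that class when the rebuilt points are distinct. Distinctness is the non-vanishing of one
   polynomial, which holds at the image of the configuration 1, ..., n; since two such conditions
   always meet on the target, a general fibre has one point and d_T = 1. *)

theory Submission
  imports Defs "HOL-Computational_Algebra.Polynomial"
begin

text \<open>A finite set V of labels stands for a convex polygon whose vertices are V in increasing
  cyclic order; the two pieces cut off by a diagonal are again of this form.\<close>

definition cyclic_adjacent :: "nat set \<Rightarrow> nat \<Rightarrow> nat \<Rightarrow> bool" where
  "cyclic_adjacent V a b = (a \<in> V \<and> b \<in> V \<and> a < b \<and>
     ((\<forall>c\<in>V. \<not> (a < c \<and> c < b)) \<or> (a = Min V \<and> b = Max V)))"

definition diagonal_of :: "nat set \<Rightarrow> nat \<times> nat \<Rightarrow> bool" where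
  "diagonal_of V D = (fst D \<in> V \<and> snd D \<in> V \<and> fst D < snd D \<and> \<not> cyclic_adjacent V (fst D) (snd D))"

definition noncrossing :: "(nat \<times> nat) set \<Rightarrow> bool" where
  "noncrossing S = (\<forall>D\<in>S. \<forall>E\<in>S. \<not> crosses D E)"

definition joined_in :: "nat set \<Rightarrow> (nat \<times> nat) set \<Rightarrow> nat \<Rightarrow> nat \<Rightarrow> bool" where
  "joined_in V S a b = (cyclic_adjacent V a b \<or> (a, b) \<in> S)"

definition has_apex :: "nat set \<Rightarrow> (nat \<times> nat) set \<Rightarrow> nat \<Rightarrow> nat \<Rightarrow> bool" where
  "has_apex V S p q = (\<exists>x\<in>V. x \<noteq> p \<and> x \<noteq> q \<and>
     joined_in V S (min p x) (max p x) \<and> joined_in V S (min x q) (max x q))"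

definition arc_inside :: "nat set \<Rightarrow> nat \<Rightarrow> nat \<Rightarrow> nat set" where
  "arc_inside V a b = {x\<in>V. a \<le> x \<and> x \<le> b}"

definition arc_outside :: "nat set \<Rightarrow> nat \<Rightarrow> nat \<Rightarrow> nat set" where
  "arc_outside V a b = {x\<in>V. x \<le> a \<or> b \<le> x}"

lemma finite_arcs: "finite V \<Longrightarrow> finite (arc_inside V a b) \<and> finite (arc_outside V a b)"
  by (simp add: arc_inside_def arc_outside_def)

lemma Min_Max_arc_inside:
  assumes "finite V" "a \<in> V" "b \<in> V" "a < b"
  shows "Min (arc_inside V a b) = a" "Max (arc_inside V a b) = b"
  using assms by (auto simp: arc_inside_def intro!: Min_eqI Max_eqI)

lemma Min_Max_arc_outside:
  assumes "finite V" "a \<in> V" "b \<in> V" "a < b"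
  shows "Min (arc_outside V a b) = Min V" "Max (arc_outside V a b) = Max V"
proof -
  have "V \<noteq> {}" using assms by auto
  then have "Min V \<in> V" "Max V \<in> V" using assms(1) by auto
  then show "Min (arc_outside V a b) = Min V" "Max (arc_outside V a b) = Max V"
    using assms by (auto simp: arc_outside_def intro!: Min_eqI Max_eqI)
qed

lemma card_arcs:
  assumes "finite V" "diagonal_of V (a, b)"
  shows "card (arc_inside V a b) + card (arc_outside V a b) = card V + 2"
    and "3 \<le> card (arc_inside V a b)" and "3 \<le> card (arc_outside V a b)"
proof -
  have ab: "a \<in> V" "b \<in> V" "a < b" "\<not> cyclic_adjacent V a b"
    using assms by (auto simp: diagonal_of_def)
  have fin: "finite (arc_inside V a b)" "finite (arc_outside V a b)"
    using finite_arcs[OF assms(1)] by auto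
  have "arc_inside V a b \<union> arc_outside V a b = V" "arc_inside V a b \<inter> arc_outside V a b = {a, b}"
    using ab by (auto simp: arc_inside_def arc_outside_def)
  then show "card (arc_inside V a b) + card (arc_outside V a b) = card V + 2"
    using card_Un_Int[OF fin] ab by simp
  obtain c where c: "c \<in> V" "a < c" "c < b" using ab by (auto simp: cyclic_adjacent_def)
  have "{a, c, b} \<subseteq> arc_inside V a b" using ab c by (auto simp: arc_inside_def)
  from card_mono[OF fin(1) this] show "3 \<le> card (arc_inside V a b)" using c by auto
  obtain d where d: "d \<in> V" "d < a \<or> b < d"
  proof (cases "a = Min V")
    case True
    then have "b \<noteq> Max V" using ab by (auto simp: cyclic_adjacent_def)
    then show ?thesis using that Max_in[OF assms(1)] Max_ge[OF assms(1)] ab by force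
  next
    case False
    then show ?thesis using that Min_in[OF assms(1)] Min_le[OF assms(1)] ab by force
  qed
  have "{a, d, b} \<subseteq> arc_outside V a b" using ab d by (auto simp: arc_outside_def)
  from card_mono[OF fin(2) this] show "3 \<le> card (arc_outside V a b)" using d ab by auto
qed

lemma cyclic_adjacent_arc_inside:
  assumes "finite V" "a \<in> V" "b \<in> V" "a < b" "cyclic_adjacent (arc_inside V a b) c d"
  shows "cyclic_adjacent V c d \<or> (c, d) = (a, b)"
proof -
  have cd: "c \<in> V" "d \<in> V" "c < d" "a \<le> c" "d \<le> b"
    using assms(5) by (auto simp: cyclic_adjacent_def arc_inside_def)
  consider "\<forall>e\<in>arc_inside V a b. \<not> (c < e \<and> e < d)" | "c = a \<and> d = b"
    using assms(5) Min_Max_arc_inside[OF assms(1-4)] by (auto simp: cyclic_adjacent_def)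
  then show ?thesis
  proof cases
    case 1
    then have "\<forall>e\<in>V. \<not> (c < e \<and> e < d)" using cd by (auto simp: arc_inside_def)
    then show ?thesis using cd by (auto simp: cyclic_adjacent_def)
  qed auto
qed

lemma cyclic_adjacent_arc_outside:
  assumes "finite V" "a \<in> V" "b \<in> V" "a < b" "cyclic_adjacent (arc_outside V a b) c d"
  shows "cyclic_adjacent V c d \<or> (c, d) = (a, b)"
proof -
  have cd: "c \<in> V" "d \<in> V" "c < d" "c \<le> a \<or> b \<le> c" "d \<le> a \<or> b \<le> d"
    using assms(5) by (auto simp: cyclic_adjacent_def arc_outside_def)
  consider "\<forall>e\<in>arc_outside V a b. \<not> (c < e \<and> e < d)" | "c = Min V \<and> d = Max V"
    using assms(5) Min_Max_arc_outside[OF assms(1-4)] by (auto simp: cyclic_adjacent_def)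
  then show ?thesis
  proof cases
    case 1
    show ?thesis
    proof (cases "d \<le> a \<or> b \<le> c")
      case True
      then show ?thesis using 1 cd by (auto simp: cyclic_adjacent_def arc_outside_def)
    next
      case False
      then show ?thesis using 1 cd assms(2-4) by (auto simp: arc_outside_def)
    qed
  next
    case 2
    then show ?thesis using cd by (auto simp: cyclic_adjacent_def)
  qed
qed

lemma cyclic_adjacent_arcs:
  assumes "finite V" "a \<in> V" "b \<in> V" "a < b" "cyclic_adjacent V p q"
  shows "cyclic_adjacent (arc_inside V a b) p q \<or> cyclic_adjacent (arc_outside V a b) p q"
proof -
  have pq: "p \<in> V" "q \<in> V" "p < q" using assms(5) by (auto simp: cyclic_adjacent_def)
  consider "\<forall>e\<in>V. \<not> (p < e \<and> e < q)" | "p = Min V \<and> q = Max V"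
    using assms(5) by (auto simp: cyclic_adjacent_def)
  then show ?thesis
  proof cases
    case 1
    have "\<not> (p < a \<and> a < q)" "\<not> (p < b \<and> b < q)" using 1 assms(2,3) by auto
    then have "(a \<le> p \<and> q \<le> b) \<or> ((p \<le> a \<or> b \<le> p) \<and> (q \<le> a \<or> b \<le> q))"
      using assms(4) pq by linarith
    then show ?thesis
      using 1 pq by (auto simp: cyclic_adjacent_def arc_inside_def arc_outside_def)
  next
    case 2
    have "Min V \<le> a" "b \<le> Max V" using assms(1-3) by auto
    then have "cyclic_adjacent (arc_outside V a b) p q"
      using 2 Min_Max_arc_outside[OF assms(1-4)] pq
      by (auto simp: cyclic_adjacent_def arc_outside_def)
    then show ?thesis ..
  qed
qed

lemma cyclic_adjacent_card3:
  assumes "finite V" "card V = 3" "c \<in> V" "d \<in> V" "c < d"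
  shows "cyclic_adjacent V c d"
proof (cases "\<forall>e\<in>V. \<not> (c < e \<and> e < d)")
  case True
  then show ?thesis using assms by (auto simp: cyclic_adjacent_def)
next
  case False
  then obtain e where e: "e \<in> V" "c < e" "e < d" by auto
  have "{c, e, d} \<subseteq> V" "card {c, e, d} = 3" using e assms by auto
  then have "V = {c, e, d}" using card_subset_eq[OF assms(1)] assms(2) by metis
  then have "Min V = c" "Max V = d" using e by (auto simp: min_def max_def)
  then show ?thesis using assms by (auto simp: cyclic_adjacent_def)
qed

lemma noncrossing_split:
  assumes "finite V" "(a, b) \<in> S" "S \<subseteq> Collect (diagonal_of V)" "noncrossing S"
  obtains S1 S2 where "S1 \<subseteq> S" "S2 \<subseteq> S"
    "S1 \<subseteq> Collect (diagonal_of (arc_inside V a b))" "S2 \<subseteq> Collect (diagonal_of (arc_outside V a b))"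
    "noncrossing S1" "noncrossing S2" "card S = Suc (card S1 + card S2)"
proof -
  define S1 where "S1 = {E\<in>S - {(a, b)}. fst E \<in> arc_inside V a b \<and> snd E \<in> arc_inside V a b}"
  define S2 where "S2 = {E\<in>S - {(a, b)}. fst E \<in> arc_outside V a b \<and> snd E \<in> arc_outside V a b}"
  have ab: "a \<in> V" "b \<in> V" "a < b" using assms(2,3) by (auto simp: diagonal_of_def)
  have S: "S = insert (a, b) (S1 \<union> S2)"
  proof (intro equalityI subsetI)
    fix E assume E: "E \<in> S"
    obtain c d where [simp]: "E = (c, d)" by (cases E)
    have "c \<in> V" "d \<in> V" "c < d" using E assms(3) by (auto simp: diagonal_of_def)
    moreover have "\<not> crosses (a, b) (c, d)" using E assms(2,4) by (auto simp: noncrossing_def)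
    ultimately show "E \<in> insert (a, b) (S1 \<union> S2)"
      using E ab by (auto simp: S1_def S2_def arc_inside_def arc_outside_def crosses_def)
  qed (auto simp: S1_def S2_def assms(2))
  have disj: "S1 \<inter> S2 = {}"
    using ab assms(3) by (auto simp: S1_def S2_def arc_inside_def arc_outside_def diagonal_of_def)
  have "S1 \<subseteq> arc_inside V a b \<times> arc_inside V a b" "S2 \<subseteq> arc_outside V a b \<times> arc_outside V a b"
    by (auto simp: S1_def S2_def mem_Times_iff)
  then have "finite S1" "finite S2"
    using finite_arcs[OF assms(1)] by (auto intro: finite_subset)
  moreover have "(a, b) \<notin> S1 \<union> S2" by (auto simp: S1_def S2_def)
  ultimately have "card S = Suc (card S1 + card S2)"
    by (subst S) (simp add: card_Un_disjoint disj)
  moreover have "S1 \<subseteq> Collect (diagonal_of (arc_inside V a b))"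
    using assms(3) cyclic_adjacent_arc_inside[OF assms(1) ab]
    by (fastforce simp: S1_def diagonal_of_def)
  moreover have "S2 \<subseteq> Collect (diagonal_of (arc_outside V a b))"
    using assms(3) cyclic_adjacent_arc_outside[OF assms(1) ab]
    by (fastforce simp: S2_def diagonal_of_def)
  moreover have "noncrossing S1" "noncrossing S2"
    using assms(4) by (auto simp: noncrossing_def S1_def S2_def)
  ultimately show ?thesis using that[of S1 S2] by (auto simp: S1_def S2_def)
qed

lemma card_noncrossing_diagonals:
  assumes "finite V" "3 \<le> card V" "S \<subseteq> Collect (diagonal_of V)" "noncrossing S"
  shows "card S + 3 \<le> card V"
  using assms
proof (induction "card V" arbitrary: V S rule: less_induct)
  case less
  show ?case
  proof (cases "S = {}")
    case False
    then obtain a b where ab: "(a, b) \<in> S" by auto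
    then have diag: "diagonal_of V (a, b)" using less.prems(3) by auto
    obtain S1 S2 where S12: "S1 \<subseteq> Collect (diagonal_of (arc_inside V a b))"
      "S2 \<subseteq> Collect (diagonal_of (arc_outside V a b))" "noncrossing S1" "noncrossing S2"
      "card S = Suc (card S1 + card S2)"
      using noncrossing_split[OF less.prems(1) ab less.prems(3,4)] by metis
    note arcs = card_arcs[OF less.prems(1) diag] finite_arcs[OF less.prems(1), of a b]
    have "card S1 + 3 \<le> card (arc_inside V a b)" "card S2 + 3 \<le> card (arc_outside V a b)"
      using less.hyps[of "arc_inside V a b" S1] less.hyps[of "arc_outside V a b" S2] arcs S12
      by auto
    then show ?thesis using S12(5) arcs(1) by linarith
  qed (use less in simp)
qed

lemma joined_in_arc_inside:
  assumes "finite V" "(a, b) \<in> S" "diagonal_of V (a, b)" "S' \<subseteq> S"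
    "joined_in (arc_inside V a b) S' c d"
  shows "joined_in V S c d"
  using assms cyclic_adjacent_arc_inside[OF assms(1), of a b c d]
  by (auto simp: joined_in_def diagonal_of_def)

lemma joined_in_arc_outside:
  assumes "finite V" "(a, b) \<in> S" "diagonal_of V (a, b)" "S' \<subseteq> S"
    "joined_in (arc_outside V a b) S' c d"
  shows "joined_in V S c d"
  using assms cyclic_adjacent_arc_outside[OF assms(1), of a b c d]
  by (auto simp: joined_in_def diagonal_of_def)

lemma has_apex_card3:
  assumes "finite V" "card V = 3" "cyclic_adjacent V p q"
  shows "has_apex V S p q"
proof -
  have pq: "p \<in> V" "q \<in> V" "p < q" using assms(3) by (auto simp: cyclic_adjacent_def)
  have "\<not> V \<subseteq> {p, q}" using assms(2) card_mono[of "{p, q}" V] by (auto simp: card_insert_if split: if_splits)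
  then obtain r where "r \<in> V" "r \<noteq> p" "r \<noteq> q" by auto
  then show ?thesis
    unfolding has_apex_def joined_in_def using pq cyclic_adjacent_card3[OF assms(1,2)]
    by (intro bexI[of _ r]) (auto simp: min_def max_def)
qed

text \<open>A side lying in no triangle costs one diagonal: maximal noncrossing families triangulate.\<close>

lemma card_noncrossing_diagonals_no_apex:
  assumes "finite V" "3 \<le> card V" "S \<subseteq> Collect (diagonal_of V)" "noncrossing S"
    "cyclic_adjacent V p q" "\<not> has_apex V S p q"
  shows "card S + 4 \<le> card V"
  using assms
proof (induction "card V" arbitrary: V S rule: less_induct)
  case less
  show ?case
  proof (cases "S = {}")
    case True
    have "card V \<noteq> 3" using has_apex_card3[OF less.prems(1) _ less.prems(5)] less.prems(6) by blast
    then show ?thesis using less.prems(2) True by simp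
  next
    case False
    then obtain a b where ab: "(a, b) \<in> S" by auto
    then have diag: "diagonal_of V (a, b)" using less.prems(3) by auto
    then have ab': "a \<in> V" "b \<in> V" "a < b" by (auto simp: diagonal_of_def)
    obtain S1 S2 where S12: "S1 \<subseteq> S" "S2 \<subseteq> S"
      "S1 \<subseteq> Collect (diagonal_of (arc_inside V a b))"
      "S2 \<subseteq> Collect (diagonal_of (arc_outside V a b))" "noncrossing S1" "noncrossing S2"
      "card S = Suc (card S1 + card S2)"
      using noncrossing_split[OF less.prems(1) ab less.prems(3,4)] by metis
    note arcs = card_arcs[OF less.prems(1) diag] finite_arcs[OF less.prems(1), of a b]
    have c1: "card S1 + 3 \<le> card (arc_inside V a b)"
      and c2: "card S2 + 3 \<le> card (arc_outside V a b)"
      using card_noncrossing_diagonals[of "arc_inside V a b" S1]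
        card_noncrossing_diagonals[of "arc_outside V a b" S2] arcs S12 by auto
    from cyclic_adjacent_arcs[OF less.prems(1) ab' less.prems(5)] show ?thesis
    proof
      assume adj: "cyclic_adjacent (arc_inside V a b) p q"
      have "\<not> has_apex (arc_inside V a b) S1 p q"
        using less.prems(6) joined_in_arc_inside[OF less.prems(1) ab diag S12(1)]
        unfolding has_apex_def by (auto simp: arc_inside_def)
      then have "card S1 + 4 \<le> card (arc_inside V a b)"
        using less.hyps[of "arc_inside V a b" S1] arcs S12 adj by auto
      then show ?thesis using S12(7) c2 arcs(1) by linarith
    next
      assume adj: "cyclic_adjacent (arc_outside V a b) p q"
      have "\<not> has_apex (arc_outside V a b) S2 p q"
        using less.prems(6) joined_in_arc_outside[OF less.prems(1) ab diag S12(2)]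
        unfolding has_apex_def by (auto simp: arc_outside_def)
      then have "card S2 + 4 \<le> card (arc_outside V a b)"
        using less.hyps[of "arc_outside V a b" S2] arcs S12 adj by auto
      then show ?thesis using S12(7) c1 arcs(1) by linarith
    qed
  qed
qed

lemma cyclic_adjacent_range:
  assumes "1 \<le> n"
  shows "cyclic_adjacent {1..n} a b \<longleftrightarrow> a < b \<and> 1 \<le> a \<and> b \<le> n \<and> is_side n a b"
proof -
  have "Min {1..n} = 1" "Max {1..n} = n" using assms by (auto intro!: Min_eqI Max_eqI)
  then show ?thesis unfolding cyclic_adjacent_def is_side_def by auto
qed

lemma diagonal_of_range: "1 \<le> n \<Longrightarrow> diagonal_of {1..n} D \<longleftrightarrow> is_diagonal n D"
  unfolding diagonal_of_def cyclic_adjacent_range is_diagonal_def is_side_def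
  by (cases D) auto

definition half_poly :: "nat \<Rightarrow> bool \<Rightarrow> nat \<times> nat \<Rightarrow> nat set" where
  "half_poly n b D = (if b then {fst D..snd D} else {x\<in>{1..n}. x \<le> fst D \<or> snd D \<le> x})"

definition half_poly_of :: "nat \<Rightarrow> nat \<Rightarrow> nat \<times> nat \<Rightarrow> nat set" where
  "half_poly_of n w D = half_poly n (fst D < w \<and> w < snd D) D"

definition opair :: "nat \<Rightarrow> nat \<Rightarrow> nat \<times> nat" where
  "opair a c = (min a c, max a c)"

lemma finite_half_poly: "finite (half_poly n b D)"
  by (auto simp: half_poly_def)

lemma ends_in_half_poly: "1 \<le> u \<Longrightarrow> u < v \<Longrightarrow> v \<le> n \<Longrightarrow> u \<in> half_poly n b (u, v) \<and> v \<in> half_poly n b (u, v)"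
  by (auto simp: half_poly_def)

lemma half_poly_range: "1 \<le> u \<Longrightarrow> v \<le> n \<Longrightarrow> half_poly n b (u, v) \<subseteq> {1..n}"
  by (auto simp: half_poly_def)

lemma half_poly_eq_half_poly_of:
  assumes "w \<in> half_poly n b (a, c)" "w \<notin> {a, c}" "a < c"
  shows "half_poly n b (a, c) = half_poly_of n w (a, c)"
  using assms by (cases b) (auto simp: half_poly_def half_poly_of_def)

lemma in_half_poly_of:
  assumes "w \<notin> {a, c}" "a < c" "1 \<le> w" "w \<le> n" "c \<le> n"
  shows "w \<in> half_poly_of n w (a, c)"
  using assms by (auto simp: half_poly_def half_poly_of_def)

lemma half_poly_apex_left:
  assumes "x \<in> half_poly n b (u, v)" "x \<notin> {u, v}" "1 \<le> u" "u < v" "v \<le> n"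
  shows "\<exists>b'. half_poly n b' (opair u x) \<subseteq> half_poly n b (u, v) - {v}"
proof (cases b)
  case True
  then show ?thesis using assms by (intro exI[of _ True]) (auto simp: half_poly_def opair_def)
next
  case False
  then have "x < u \<or> v < x" "x \<le> n" "1 \<le> x" using assms by (auto simp: half_poly_def)
  then show ?thesis
  proof (elim disjE)
    assume "x < u"
    then show ?thesis using assms False by (intro exI[of _ True]) (auto simp: half_poly_def opair_def)
  next
    assume "v < x"
    then show ?thesis using assms False by (intro exI[of _ False]) (auto simp: half_poly_def opair_def)
  qed
qed

lemma half_poly_apex_right:
  assumes "x \<in> half_poly n b (u, v)" "x \<notin> {u, v}" "1 \<le> u" "u < v" "v \<le> n"
  shows "\<exists>b'. half_poly n b' (opair x v) \<subseteq> half_poly n b (u, v) - {u}"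
proof (cases b)
  case True
  then show ?thesis using assms by (intro exI[of _ True]) (auto simp: half_poly_def opair_def)
next
  case False
  then have "x < u \<or> v < x" "x \<le> n" "1 \<le> x" using assms by (auto simp: half_poly_def)
  then show ?thesis
  proof (elim disjE)
    assume "x < u"
    then show ?thesis using assms False by (intro exI[of _ False]) (auto simp: half_poly_def opair_def)
  next
    assume "v < x"
    then show ?thesis using assms False by (intro exI[of _ True]) (auto simp: half_poly_def opair_def)
  qed
qed

lemma half_poly_apex_split:
  assumes "x \<in> half_poly n b (u, v)" "x \<notin> {u, v}" "1 \<le> u" "u < v" "v \<le> n"
    "i \<in> half_poly n b (u, v)" "i \<notin> {u, v, x}"
  shows "(\<exists>b'. i \<in> half_poly n b' (opair u x) \<and> half_poly n b' (opair u x) \<subseteq> half_poly n b (u, v) - {v}) \<or>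
         (\<exists>b'. i \<in> half_poly n b' (opair x v) \<and> half_poly n b' (opair x v) \<subseteq> half_poly n b (u, v) - {u})"
proof (cases b)
  case True
  then have "u < x" "x < v" "u < i" "i < v" using assms by (auto simp: half_poly_def)
  then show ?thesis
  proof (cases "i < x")
    case True
    then show ?thesis using assms \<open>u < x\<close> \<open>x < v\<close> \<open>u < i\<close> \<open>b\<close>
      by (intro disjI1 exI[of _ True]) (auto simp: half_poly_def opair_def)
  next
    case False
    then show ?thesis using assms \<open>u < x\<close> \<open>x < v\<close> \<open>i < v\<close> \<open>b\<close>
      by (intro disjI2 exI[of _ True]) (auto simp: half_poly_def opair_def)
  qed
next
  case False
  then have x: "x < u \<or> v < x" "x \<le> n" "1 \<le> x" and i: "i < u \<or> v < i" "i \<le> n" "1 \<le> i"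
    using assms by (auto simp: half_poly_def)
  consider "x < u" "i < x" | "x < u" "x < i" "i < u" | "x < u" "v < i" |
     "v < x" "i < u" | "v < x" "v < i" "i < x" | "v < x" "x < i"
    using x i assms(7) by fastforce
  then show ?thesis
  proof cases
    case 1 then show ?thesis using assms False by (intro disjI2 exI[of _ False]) (auto simp: half_poly_def opair_def)
  next
    case 2 then show ?thesis using assms False by (intro disjI1 exI[of _ True]) (auto simp: half_poly_def opair_def)
  next
    case 3 then show ?thesis using assms False by (intro disjI2 exI[of _ False]) (auto simp: half_poly_def opair_def)
  next
    case 4 then show ?thesis using assms False by (intro disjI1 exI[of _ False]) (auto simp: half_poly_def opair_def)
  next
    case 5 then show ?thesis using assms False by (intro disjI2 exI[of _ True]) (auto simp: half_poly_def opair_def)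
  next
    case 6 then show ?thesis using assms False by (intro disjI1 exI[of _ False]) (auto simp: half_poly_def opair_def)
  qed
qed

lemma half_poly_side:
  assumes "is_side n a c" "s \<in> half_poly n b (a, c)" "s \<notin> {a, c}" "1 \<le> s" "s \<le> n"
  shows "half_poly n b (a, c) = {1..n}"
  using assms by (cases b) (auto simp: half_poly_def is_side_def)

lemma crosses_half_poly:
  assumes "t \<in> half_poly n b (u, v)" "t \<notin> {u, v}" "s \<in> {1..n}" "s \<notin> half_poly n b (u, v)"
    "1 \<le> u" "u < v" "v \<le> n"
  shows "crosses (u, v) (opair t s)"
  using assms by (cases b) (auto simp: half_poly_def opair_def crosses_def min_def max_def)

lemma half_poly_ear:
  assumes "x \<in> half_poly n b (u, v)" "x \<notin> {u, v}"
    "is_side n (min u x) (max u x)" "is_side n (min x v) (max x v)"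
    "1 \<le> u" "u < v" "v \<le> n" "\<not> is_side n u v"
  shows "half_poly n b (u, v) = {u, x, v}"
  using assms by (cases b) (auto simp: half_poly_def is_side_def min_def max_def split: if_splits)

lemma side_neighbours_unique:
  assumes "is_side n (min u w) (max u w)" "is_side n (min w v) (max w v)"
    "is_side n (min u' w) (max u' w)" "is_side n (min w v') (max w v')"
    "u < v" "u' < v'" "4 \<le> n" "v \<le> n" "v' \<le> n" "w \<le> n"
  shows "(u, v) = (u', v')"
  using assms by (auto simp: is_side_def min_def max_def split: if_splits)

lemma side_neighbours_succ:
  assumes "is_side n (min u i) (max u i)" "is_side n (min i v) (max i v)" "u \<noteq> v"
    "4 \<le> n" "u \<le> n" "v \<le> n" "1 \<le> i" "i \<le> n"
  shows "(if i = n then 1 else i + 1) \<in> {u, v}"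
  using assms by (auto simp: is_side_def min_def max_def split: if_splits)

lemma S_D_opair: "S_D n (opair a c) = S_D n (a, c)"
  by (auto simp: S_D_def opair_def min_def max_def)

lemma S_D_swap: "S_D n (a, c) = S_D n (c, a)"
  by (auto simp: S_D_def)

lemma ends_in_S_D: "fst D \<in> S_D n D \<and> snd D \<in> S_D n D"
  by (auto simp: S_D_def split: prod.splits)

text \<open>Two diagonals from u whose other ends are adjacent touch three common edges: the two
  edges at u and the edge between their other ends.\<close>

lemma card_S_D_inter_ge3:
  assumes "1 \<le> u" "u \<le> n" "1 \<le> v" "v \<le> n" "1 \<le> x" "x \<le> n" "u \<noteq> v" "u \<noteq> x" "x \<noteq> v" "4 \<le> n"
    "\<not> is_side n (min u v) (max u v)" "\<not> is_side n (min u x) (max u x)"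
    "is_side n (min x v) (max x v)"
  shows "3 \<le> card (S_D n (u, v) \<inter> S_D n (u, x))"
proof -
  have "prev_edge n x = v \<or> prev_edge n v = x" using assms(3-6,9,10,13)
    by (auto simp: prev_edge_def is_side_def min_def max_def split: if_splits)
  then obtain e where e: "e \<in> {v, x}" "e \<in> S_D n (u, v)" "e \<in> S_D n (u, x)"
    by (auto simp: S_D_def)
  have "is_side n (min u (prev_edge n u)) (max u (prev_edge n u))"
    using assms(1,2,10) by (auto simp: prev_edge_def is_side_def min_def max_def)
  then have "prev_edge n u \<noteq> v" "prev_edge n u \<noteq> x" using assms(11,12) by auto
  moreover have "prev_edge n u \<noteq> u" using assms(1,10) by (auto simp: prev_edge_def)
  ultimately have "card {prev_edge n u, u, e} = 3" using e assms(7,8) by auto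
  moreover have "{prev_edge n u, u, e} \<subseteq> S_D n (u, v) \<inter> S_D n (u, x)"
    using e by (auto simp: S_D_def)
  moreover have "finite (S_D n (u, v) \<inter> S_D n (u, x))" by (simp add: S_D_def)
  ultimately show ?thesis by (metis card_mono)
qed

lemma card_S_D:
  assumes "is_diagonal n D" "4 \<le> n"
  shows "card (S_D n D) = 4" "S_D n D \<subseteq> {1..n}"
  using assms by (cases D; auto simp: is_diagonal_def S_D_def prev_edge_def card_insert_if)+

locale polygon_triangulation =
  fixes n :: nat and T :: "(nat \<times> nat) set"
  assumes n_ge_4: "4 \<le> n" and triangulation: "is_triangulation n T"
begin

lemma diagonal_T: "D \<in> T \<Longrightarrow> is_diagonal n D"
  using triangulation by (auto simp: is_triangulation_def)

lemma T_diagonal_of: "T \<subseteq> Collect (diagonal_of {1..n})"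
  using diagonal_T diagonal_of_range[of n] n_ge_4 by auto

lemma noncrossing_T: "noncrossing T"
  using triangulation by (auto simp: is_triangulation_def noncrossing_def)

lemma card_T: "card T = n - 3"
  using triangulation by (auto simp: is_triangulation_def)

lemma finite_T: "finite T"
  using card_T n_ge_4 card.infinite by fastforce

lemma T_nonempty: "T \<noteq> {}"
  using card_T n_ge_4 by auto

lemma T_bounds: "(u, v) \<in> T \<Longrightarrow> 1 \<le> u \<and> u < v \<and> v \<le> n \<and> \<not> is_side n u v"
  using diagonal_T[of "(u, v)"] by (auto simp: is_diagonal_def is_side_def)

lemma joined_of_joined_in: "joined_in {1..n} T c d \<Longrightarrow> joined n T c d"
  using n_ge_4 cyclic_adjacent_range[of n c d] by (auto simp: joined_in_def joined_def)

text \<open>This is where card T = n - 3, i.e. maximality of T, is used.\<close>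

lemma apex_exists:
  assumes D: "(u, v) \<in> T"
  shows "\<exists>x\<in>half_poly n b (u, v). x \<notin> {u, v} \<and>
    joined n T (min u x) (max u x) \<and> joined n T (min x v) (max x v)"
proof (rule ccontr)
  assume no_apex: "\<not> ?thesis"
  let ?V = "{1..n::nat}"
  have fin: "finite ?V" by simp
  have diag: "diagonal_of ?V (u, v)" using D T_diagonal_of by auto
  have uv: "1 \<le> u" "u < v" "v \<le> n" using T_bounds[OF D] by auto
  obtain S1 S2 where S12: "S1 \<subseteq> T" "S2 \<subseteq> T"
    "S1 \<subseteq> Collect (diagonal_of (arc_inside ?V u v))"
    "S2 \<subseteq> Collect (diagonal_of (arc_outside ?V u v))" "noncrossing S1" "noncrossing S2"
    "card T = Suc (card S1 + card S2)"
    using noncrossing_split[OF fin D T_diagonal_of noncrossing_T] by metis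
  note arcs = card_arcs[OF fin diag] finite_arcs[OF fin, of u v]
  have c1: "card S1 + 3 \<le> card (arc_inside ?V u v)"
    and c2: "card S2 + 3 \<le> card (arc_outside ?V u v)"
    using card_noncrossing_diagonals[of "arc_inside ?V u v" S1]
      card_noncrossing_diagonals[of "arc_outside ?V u v" S2] arcs S12 by auto
  have total: "card T + 3 = card ?V" using card_T n_ge_4 by simp
  show False
  proof (cases b)
    case True
    have half: "half_poly n b (u, v) = arc_inside ?V u v"
      using True uv by (auto simp: half_poly_def arc_inside_def)
    have "cyclic_adjacent (arc_inside ?V u v) u v"
      using Min_Max_arc_inside[OF fin _ _ uv(2)] uv by (auto simp: cyclic_adjacent_def arc_inside_def)
    moreover have "\<not> has_apex (arc_inside ?V u v) S1 u v"
      using no_apex joined_in_arc_inside[OF fin D diag S12(1)] joined_of_joined_in half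
      unfolding has_apex_def by blast
    ultimately have "card S1 + 4 \<le> card (arc_inside ?V u v)"
      using card_noncrossing_diagonals_no_apex[of "arc_inside ?V u v" S1] arcs S12 by auto
    then show False using S12(7) c2 arcs(1) total by linarith
  next
    case False
    have half: "half_poly n b (u, v) = arc_outside ?V u v"
      using False uv by (auto simp: half_poly_def arc_outside_def)
    have "cyclic_adjacent (arc_outside ?V u v) u v"
      using uv by (auto simp: cyclic_adjacent_def arc_outside_def)
    moreover have "\<not> has_apex (arc_outside ?V u v) S2 u v"
      using no_apex joined_in_arc_outside[OF fin D diag S12(2)] joined_of_joined_in half
      unfolding has_apex_def by blast
    ultimately have "card S2 + 4 \<le> card (arc_outside ?V u v)"
      using card_noncrossing_diagonals_no_apex[of "arc_outside ?V u v" S2] arcs S12 by auto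
    then show False using S12(7) c1 arcs(1) total by linarith
  qed
qed

end

locale triangulation_no_inner = polygon_triangulation +
  assumes triangles_have_side:
    "\<forall>(a, b, c) \<in> triangles n T. is_side n a b \<or> is_side n b c \<or> is_side n a c"
begin

abbreviation linked :: "nat \<Rightarrow> nat \<Rightarrow> bool" where
  "linked a c \<equiv> joined n T (min a c) (max a c)"

abbreviation boundary :: "nat \<Rightarrow> nat \<Rightarrow> bool" where
  "boundary a c \<equiv> is_side n (min a c) (max a c)"

definition free_vertex :: "nat \<Rightarrow> bool" where
  "free_vertex w = (\<forall>E\<in>T. w \<noteq> fst E \<and> w \<noteq> snd E)"

lemma triangle_has_side:
  assumes "linked u x" "linked x v" "linked u v" "u \<noteq> x" "x \<noteq> v" "u \<noteq> v"
    "1 \<le> u" "1 \<le> v" "1 \<le> x" "u \<le> n" "v \<le> n" "x \<le> n"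
  shows "boundary u x \<or> boundary x v \<or> boundary u v"
proof -
  have H: "\<And>a b c. a < b \<Longrightarrow> b < c \<Longrightarrow> 1 \<le> a \<Longrightarrow> c \<le> n \<Longrightarrow> joined n T a b \<Longrightarrow>
      joined n T b c \<Longrightarrow> joined n T a c \<Longrightarrow> is_side n a b \<or> is_side n b c \<or> is_side n a c"
    using triangles_have_side unfolding triangles_def by auto
  consider "u < x" "x < v" | "u < v" "v < x" | "x < u" "u < v" | "x < v" "v < u" |
      "v < u" "u < x" | "v < x" "x < u"
    using assms(4-6) by linarith
  then show ?thesis
  proof cases
    case 1 then show ?thesis using H[of u x v] assms by (auto simp: min_def max_def)
  next
    case 2 then show ?thesis using H[of u v x] assms by (auto simp: min_def max_def)
  next
    case 3 then show ?thesis using H[of x u v] assms by (auto simp: min_def max_def)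
  next
    case 4 then show ?thesis using H[of x v u] assms by (auto simp: min_def max_def)
  next
    case 5 then show ?thesis using H[of v u x] assms by (auto simp: min_def max_def)
  next
    case 6 then show ?thesis using H[of v x u] assms by (auto simp: min_def max_def)
  qed
qed

lemma opair_in_T: "linked a c \<Longrightarrow> \<not> boundary a c \<Longrightarrow> opair a c \<in> T"
  by (auto simp: joined_def opair_def)

lemma not_boundary_if_opair_in_T: "opair a c \<in> T \<Longrightarrow> \<not> boundary a c"
  using T_bounds[of "min a c" "max a c"] by (auto simp: opair_def)

lemma boundary_if_free_vertex: "free_vertex w \<Longrightarrow> w \<in> {a, c} \<Longrightarrow> linked a c \<Longrightarrow> boundary a c"
  using opair_in_T[of a c] by (force simp: free_vertex_def opair_def min_def max_def)

text \<open>Descent: a vertex w strictly inside a half of (u, v), other than the apex x, lies in a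
  strictly smaller half of (u, x) or (x, v), and that side cannot be a polygon side.\<close>

lemma smaller_half_of_apex:
  assumes D: "(u, v) \<in> T"
    and x: "x \<in> half_poly n b (u, v)" "x \<notin> {u, v}" "linked u x" "linked x v"
    and w: "w \<in> half_poly n b (u, v)" "w \<notin> {u, v, x}" "1 \<le> w" "w \<le> n"
  obtains D' b' where "D' \<in> T" "D' = opair u x \<or> D' = opair x v" "w \<in> half_poly n b' D'"
    "card (half_poly n b' D') < card (half_poly n b (u, v))"
proof -
  have uv: "1 \<le> u" "u < v" "v \<le> n" using T_bounds[OF D] by auto
  have ends: "u \<in> half_poly n b (u, v)" "v \<in> half_poly n b (u, v)"
    using ends_in_half_poly[OF uv] by auto
  have smaller: "card H < card (half_poly n b (u, v))" "H \<noteq> {1..n}"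
    if "H \<subseteq> half_poly n b (u, v) - {z}" "z \<in> {u, v}" for H z
  proof -
    have "H \<subset> half_poly n b (u, v)" using that ends by blast
    then show "card H < card (half_poly n b (u, v))" by (rule psubset_card_mono[OF finite_half_poly])
    show "H \<noteq> {1..n}" using that uv by auto
  qed
  from half_poly_apex_split[OF x(1,2) uv w(1,2)] show ?thesis
  proof (elim disjE exE conjE)
    fix b' assume b': "w \<in> half_poly n b' (opair u x)"
      "half_poly n b' (opair u x) \<subseteq> half_poly n b (u, v) - {v}"
    have "\<not> boundary u x"
      using half_poly_side[of n "min u x" "max u x" w b'] b' w smaller[of _ v]
      by (auto simp: opair_def min_def max_def)
    then show ?thesis using that[of "opair u x" b'] opair_in_T x(3) b' smaller[of _ v] by auto
  next
    fix b' assume b': "w \<in> half_poly n b' (opair x v)"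
      "half_poly n b' (opair x v) \<subseteq> half_poly n b (u, v) - {u}"
    have "\<not> boundary x v"
      using half_poly_side[of n "min x v" "max x v" w b'] b' w smaller[of _ u]
      by (auto simp: opair_def min_def max_def)
    then show ?thesis using that[of "opair x v" b'] opair_in_T x(4) b' smaller[of _ u] by auto
  qed
qed

lemma free_vertex_if_ear:
  assumes D: "(u, v) \<in> T" and x: "x \<in> half_poly n b (u, v)" "x \<notin> {u, v}"
    and ear: "half_poly n b (u, v) = {u, x, v}" and side1: "boundary u x" and side2: "boundary x v"
  shows "free_vertex x"
  unfolding free_vertex_def
proof (intro ballI)
  have uv: "1 \<le> u" "u < v" "v \<le> n" using T_bounds[OF D] by auto
  fix E assume E: "E \<in> T"
  show "x \<noteq> fst E \<and> x \<noteq> snd E"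
  proof (rule ccontr)
    assume on_E: "\<not> (x \<noteq> fst E \<and> x \<noteq> snd E)"
    obtain s where s: "E = opair x s" "s \<noteq> x" "1 \<le> s" "s \<le> n"
    proof (cases E)
      case (Pair e1 e2)
      then have "1 \<le> e1" "e1 < e2" "e2 \<le> n" using T_bounds E by auto
      then show ?thesis
        using that[of "if x = e1 then e2 else e1"] Pair on_E by (auto simp: opair_def)
    qed
    show False
    proof (cases "s \<in> {u, v}")
      case True
      then have "boundary x s" using side1 side2 by (auto simp: min.commute max.commute)
      then show False using not_boundary_if_opair_in_T E s(1) by auto
    next
      case False
      then have "crosses (u, v) (opair x s)"
        using crosses_half_poly[OF x(1,2) _ _ uv] ear s by auto
      then show False using noncrossing_T D E s(1) unfolding noncrossing_def by auto
    qed
  qed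
qed

text \<open>An ear: the triangle cut off by a diagonal whose half is as small as possible has two
  polygon sides, and its middle vertex lies on no diagonal.\<close>

lemma ear_exists:
  "\<exists>u' v' w. (u', v') \<in> T \<and> 1 \<le> w \<and> w \<le> n \<and> w \<notin> {u', v'} \<and>
     boundary u' w \<and> boundary w v' \<and> free_vertex w"
proof -
  obtain D0 where "D0 \<in> T" using T_nonempty by auto
  then obtain P where P: "fst P \<in> T"
    "\<forall>Q. fst Q \<in> T \<longrightarrow> card (half_poly n (snd P) (fst P)) \<le> card (half_poly n (snd Q) (fst Q))"
    using ex_has_least_nat[of "\<lambda>Q. fst Q \<in> T" "(D0, True)" "\<lambda>Q. card (half_poly n (snd Q) (fst Q))"]
    by auto
  obtain u v b where P_eq: "P = ((u, v), b)" by (metis prod.collapse)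
  have D: "(u, v) \<in> T"
    and minimal: "\<And>D' b'. D' \<in> T \<Longrightarrow> card (half_poly n b (u, v)) \<le> card (half_poly n b' D')"
    using P P_eq by auto
  have uv: "1 \<le> u" "u < v" "v \<le> n" using T_bounds[OF D] by auto
  obtain x where x: "x \<in> half_poly n b (u, v)" "x \<notin> {u, v}" "linked u x" "linked x v"
    using apex_exists[OF D, of b] by auto
  have x_range: "1 \<le> x" "x \<le> n" using half_poly_range[OF uv(1,3), of b] x(1) by auto
  have ends: "u \<in> half_poly n b (u, v)" "v \<in> half_poly n b (u, v)"
    using ends_in_half_poly[OF uv] by auto
  have not_in_T: "D' \<notin> T" if "half_poly n b' D' \<subseteq> half_poly n b (u, v) - {z}" "z \<in> {u, v}"
    for D' b' z
  proof
    assume "D' \<in> T"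
    moreover have "half_poly n b' D' \<subset> half_poly n b (u, v)" using that ends by blast
    then have "card (half_poly n b' D') < card (half_poly n b (u, v))"
      by (rule psubset_card_mono[OF finite_half_poly])
    ultimately show False using minimal by (meson not_le)
  qed
  have side1: "boundary u x"
    using half_poly_apex_left[OF x(1,2) uv] not_in_T opair_in_T x(3) by blast
  have side2: "boundary x v"
    using half_poly_apex_right[OF x(1,2) uv] not_in_T opair_in_T x(4) by blast
  have ear: "half_poly n b (u, v) = {u, x, v}"
    using half_poly_ear[OF x(1,2) side1 side2 uv] T_bounds[OF D] by auto
  have "free_vertex x" by (rule free_vertex_if_ear[OF D x(1,2) ear side1 side2])
  then show ?thesis using D x_range x(2) side1 side2 by blast
qed

text \<open>The triangle on (u, v) with apex x has a polygon side, so its third side is a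
  diagonal sharing an endpoint with (u, v) and with adjacent other ends.\<close>

lemma card_S_D_inter_apex:
  assumes D: "(u, v) \<in> T"
    and x: "x \<in> half_poly n b (u, v)" "x \<notin> {u, v}" "linked u x" "linked x v"
    and D': "D' \<in> T" "D' = opair u x \<or> D' = opair x v"
  shows "3 \<le> card (S_D n (u, v) \<inter> S_D n D')"
proof -
  have uv: "1 \<le> u" "u < v" "v \<le> n" "\<not> is_side n u v" using T_bounds[OF D] by auto
  have x_range: "1 \<le> x" "x \<le> n" using half_poly_range[OF uv(1,3), of b] x(1) by auto
  have "linked u v" "\<not> boundary u v" using D uv by (auto simp: joined_def min_def max_def)
  then have one_side: "boundary u x \<or> boundary x v"
    using triangle_has_side[OF x(3,4)] x(2) uv x_range by auto
  from D'(2) show ?thesis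
  proof
    assume D'_eq: "D' = opair u x"
    then have "\<not> boundary u x" using D'(1) not_boundary_if_opair_in_T by blast
    then show ?thesis
      using card_S_D_inter_ge3[of u n v x] one_side D'_eq uv x x_range n_ge_4
      by (auto simp: S_D_opair min_def max_def)
  next
    assume D'_eq: "D' = opair x v"
    then have "\<not> boundary x v" using D'(1) not_boundary_if_opair_in_T by blast
    then have "3 \<le> card (S_D n (v, u) \<inter> S_D n (v, x))"
      using card_S_D_inter_ge3[of v n u x] one_side uv x x_range n_ge_4
      by (auto simp: min.commute max.commute)
    then show ?thesis using D'_eq by (metis S_D_opair S_D_swap)
  qed
qed

lemma smaller_neighbour:
  assumes ear: "(u', v') \<in> T" "1 \<le> w" "w \<le> n" "boundary u' w" "boundary w v'" "free_vertex w"
    and D: "(u, v) \<in> T" "(u, v) \<noteq> (u', v')"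
  shows "\<exists>D'\<in>T. 3 \<le> card (S_D n (u, v) \<inter> S_D n D') \<and>
    card (half_poly_of n w D') < card (half_poly_of n w (u, v))"
proof -
  have uv: "1 \<le> u" "u < v" "v \<le> n" "\<not> is_side n u v" using T_bounds[OF D(1)] by auto
  have w_uv: "w \<notin> {u, v}" using ear(6) D(1) by (force simp: free_vertex_def)
  define b where "b = (u < w \<and> w < v)"
  have w_half: "w \<in> half_poly n b (u, v)"
    using in_half_poly_of[OF w_uv uv(2) ear(2,3) uv(3)] by (simp add: half_poly_of_def b_def)
  obtain x where x: "x \<in> half_poly n b (u, v)" "x \<notin> {u, v}" "linked u x" "linked x v"
    using apex_exists[OF D(1), of b] by auto
  have "x \<noteq> w"
  proof
    assume "x = w"
    then have "boundary u w" "boundary w v"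
      using boundary_if_free_vertex[OF ear(6)] x(3,4) by auto
    then show False
      using side_neighbours_unique[of n u w v u' v'] ear T_bounds[OF ear(1)] uv D(2) n_ge_4 by auto
  qed
  then obtain D' b' where D': "D' \<in> T" "D' = opair u x \<or> D' = opair x v"
    "w \<in> half_poly n b' D'" "card (half_poly n b' D') < card (half_poly n b (u, v))"
    using smaller_half_of_apex[OF D(1) x w_half] w_uv ear(2,3) by blast
  have "half_poly n b' D' = half_poly_of n w D'"
    using half_poly_eq_half_poly_of[of w n b' "fst D'" "snd D'"] D'(1,3) ear(6) T_bounds[of "fst D'" "snd D'"]
    by (auto simp: free_vertex_def)
  moreover have "half_poly n b (u, v) = half_poly_of n w (u, v)"
    by (simp add: half_poly_of_def b_def)
  moreover have "3 \<le> card (S_D n (u, v) \<inter> S_D n D')"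
    by (rule card_S_D_inter_apex[OF D(1) x D'(1,2)])
  ultimately show ?thesis using D' by auto
qed

lemma S_D_cover:
  assumes i: "1 \<le> i" "i \<le> n"
  shows "\<exists>D\<in>T. i \<in> S_D n D"
proof (cases "free_vertex i")
  case False
  then show ?thesis using ends_in_S_D unfolding free_vertex_def by metis
next
  case free: True
  obtain D0 where D0: "D0 \<in> T" using T_nonempty by auto
  then obtain D where D: "D \<in> T"
    and minimal: "\<And>D'. D' \<in> T \<Longrightarrow> card (half_poly_of n i D) \<le> card (half_poly_of n i D')"
    using ex_has_least_nat[of "\<lambda>D. D \<in> T" D0 "\<lambda>D. card (half_poly_of n i D)"] by metis
  obtain u v where D_eq: "D = (u, v)" by (cases D)
  have uv: "1 \<le> u" "u < v" "v \<le> n" using T_bounds D D_eq by auto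
  have i_uv: "i \<notin> {u, v}" using free D D_eq by (auto simp: free_vertex_def)
  define b where "b = (u < i \<and> i < v)"
  have i_half: "i \<in> half_poly n b (u, v)"
    using in_half_poly_of[OF i_uv uv(2) i uv(3)] by (simp add: half_poly_of_def b_def)
  obtain x where x: "x \<in> half_poly n b (u, v)" "x \<notin> {u, v}" "linked u x" "linked x v"
    using apex_exists[OF D[unfolded D_eq], of b] by auto
  show ?thesis
  proof (cases "x = i")
    case True
    then have "boundary u i" "boundary i v" using boundary_if_free_vertex[OF free] x(3,4) by auto
    then have "(if i = n then 1 else i + 1) \<in> {u, v}"
      using side_neighbours_succ uv n_ge_4 i by auto
    moreover have "prev_edge n (if i = n then 1 else i + 1) = i" using i by (auto simp: prev_edge_def)
    ultimately have "i \<in> S_D n (u, v)" by (auto simp: S_D_def)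
    then show ?thesis using D D_eq by auto
  next
    case False
    then obtain D' b' where D': "D' \<in> T" "i \<in> half_poly n b' D'"
      "card (half_poly n b' D') < card (half_poly n b (u, v))"
      using smaller_half_of_apex[OF D[unfolded D_eq] x i_half] i_uv i by blast
    have "half_poly n b' D' = half_poly_of n i D'"
      using half_poly_eq_half_poly_of[of i n b' "fst D'" "snd D'"] D'(1,2) free T_bounds[of "fst D'" "snd D'"]
      by (auto simp: free_vertex_def)
    moreover have "half_poly n b (u, v) = half_poly_of n i D"
      by (simp add: half_poly_of_def b_def D_eq)
    ultimately show ?thesis using minimal[OF D'(1)] D'(3) by simp
  qed
qed

lemma sharing_order_exists:
  "\<exists>L. distinct L \<and> set L = T \<and>
     (\<forall>k<length L. 0 < k \<longrightarrow> (\<exists>j<k. 3 \<le> card (S_D n (L!k) \<inter> S_D n (L!j))))"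
proof -
  obtain u' v' w where ear: "(u', v') \<in> T" "1 \<le> w" "w \<le> n" "w \<notin> {u', v'}"
    "boundary u' w" "boundary w v'" "free_vertex w"
    using ear_exists by blast
  let ?size = "\<lambda>D. card (half_poly_of n w D)"
  obtain xs where xs: "distinct xs" "set xs = T" using finite_distinct_list[OF finite_T] by blast
  define L where "L = sort_key ?size xs"
  have L: "distinct L" "set L = T" "sorted (map ?size L)" using xs by (auto simp: L_def)
  have earlier: "\<exists>j<k. 3 \<le> card (S_D n (L!k) \<inter> S_D n (L!j))"
    if k: "k < length L" "L!k \<noteq> (u', v')" for k
  proof -
    obtain u v where uv: "L!k = (u, v)" by (cases "L!k")
    have "(u, v) \<in> T" using k(1) L(2) uv nth_mem by metis
    then obtain D' where D': "D' \<in> T" "3 \<le> card (S_D n (L!k) \<inter> S_D n D')"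
      "?size D' < ?size (L!k)"
      using smaller_neighbour[OF ear(1,2,3,5,6,7)] k(2) unfolding uv by blast
    obtain j where j: "j < length L" "L!j = D'" using D'(1) L(2) by (metis in_set_conv_nth)
    have "j < k"
    proof (rule ccontr)
      assume "\<not> j < k"
      then have "?size (L!k) \<le> ?size (L!j)" using sorted_nth_mono[OF L(3), of k j] j(1) by simp
      then show False using D'(3) j(2) by simp
    qed
    then show ?thesis using D'(2) j(2) by auto
  qed
  have "L!k \<noteq> (u', v')" if "k < length L" "0 < k" for k
    using earlier[of 0] that L(1) nth_eq_iff_index_eq[of L 0 k] by force
  then show ?thesis using L(1,2) earlier by blast
qed

end

definition scale_pt :: "complex \<Rightarrow> complex \<times> complex \<Rightarrow> complex \<times> complex" where
  "scale_pt l x = (l * fst x, l * snd x)"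

definition mobius_pt :: "complex \<Rightarrow> complex \<Rightarrow> complex \<Rightarrow> complex \<Rightarrow> complex \<times> complex \<Rightarrow> complex \<times> complex" where
  "mobius_pt a b c d x = (a * fst x + b * snd x, c * fst x + d * snd x)"

definition lincomb :: "complex \<Rightarrow> complex \<times> complex \<Rightarrow> complex \<Rightarrow> complex \<times> complex \<Rightarrow> complex \<times> complex" where
  "lincomb \<alpha> P \<beta> R = (\<alpha> * fst P + \<beta> * fst R, \<alpha> * snd P + \<beta> * snd R)"

lemma det2_mobius_pt: "det2 (mobius_pt a b c d x) (mobius_pt a b c d z) = (a * d - b * c) * det2 x z"
  by (simp add: det2_def mobius_pt_def algebra_simps)

lemma det2_scale_pt: "det2 (scale_pt l x) (scale_pt l' z) = l * l' * det2 x z"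
  by (simp add: det2_def scale_pt_def algebra_simps)

lemma det2_scale_pt_right: "det2 x (scale_pt l z) = l * det2 x z"
  by (simp add: det2_def scale_pt_def algebra_simps)

lemma det2_lincomb: "det2 u (lincomb \<alpha> A \<beta> B) = \<alpha> * det2 u A + \<beta> * det2 u B"
  by (simp add: det2_def lincomb_def algebra_simps)

lemma det2_swap: "det2 x z = - det2 z x"
  by (simp add: det2_def)

lemma det2_self: "det2 x x = 0"
  by (simp add: det2_def)

lemma det2_zero_right: "det2 x (0, 0) = 0"
  by (simp add: det2_def)

lemma nonzero_if_det2_nonzero: "det2 x z \<noteq> 0 \<Longrightarrow> x \<noteq> (0, 0)"
  by (auto simp: det2_def)

lemma scale_pt_nonzero: "l \<noteq> 0 \<Longrightarrow> x \<noteq> (0, 0) \<Longrightarrow> scale_pt l x \<noteq> (0, 0)"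
  by (auto simp: scale_pt_def prod_eq_iff)

lemma proportional_if_det2_zero:
  assumes "det2 u v = 0" "u \<noteq> (0, 0)" "v \<noteq> (0, 0)"
  shows "\<exists>l. l \<noteq> 0 \<and> v = scale_pt l u"
proof (cases "fst u = 0")
  case True
  then have "snd u \<noteq> 0" "fst v = 0" using assms(1,2) by (auto simp: det2_def prod_eq_iff)
  then show ?thesis
    using True assms(3) by (intro exI[of _ "snd v / snd u"]) (auto simp: scale_pt_def prod_eq_iff)
next
  case False
  have "snd v = fst v / fst u * snd u" using assms(1) False by (auto simp: det2_def field_simps)
  then show ?thesis
    using False assms(3) by (intro exI[of _ "fst v / fst u"]) (auto simp: scale_pt_def prod_eq_iff)
qed

lemma equiv_mobius_equiv: "equiv (conf n) (mobius_equiv n)"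
proof (rule equivI)
  show "mobius_equiv n \<subseteq> conf n \<times> conf n" by (auto simp: mobius_equiv_def)
  show "refl_on (conf n) (mobius_equiv n)"
  proof (rule refl_onI)
    fix p assume "p \<in> conf n"
    moreover have "\<forall>i\<in>{1..n}. (1::complex) \<noteq> 0 \<and>
        p i = (1 * (1 * fst (p i) + 0 * snd (p i)), 1 * (0 * fst (p i) + 1 * snd (p i)))"
      by simp
    ultimately show "(p, p) \<in> mobius_equiv n" unfolding mobius_equiv_def
      by (intro CollectI case_prodI conjI exI[of _ 1] exI[of _ 0] exI[of _ "\<lambda>_. 1"]) auto
  qed
  show "sym (mobius_equiv n)"
  proof (rule symI)
    fix p q assume "(p, q) \<in> mobius_equiv n"
    then obtain a b c d l where pq: "p \<in> conf n" "q \<in> conf n" "a * d - b * c \<noteq> 0"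
      "\<forall>i\<in>{1..n}. l i \<noteq> 0 \<and> q i = (l i * (a * fst (p i) + b * snd (p i)), l i * (c * fst (p i) + d * snd (p i)))"
      unfolding mobius_equiv_def by blast
    define l' where "l' = (\<lambda>i. 1 / (l i * (a * d - b * c)))"
    have "\<forall>i\<in>{1..n}. l' i \<noteq> 0 \<and>
        p i = (l' i * (d * fst (q i) + (- b) * snd (q i)), l' i * ((- c) * fst (q i) + a * snd (q i)))"
      using pq(3,4) by (auto simp: l'_def prod_eq_iff field_simps)
    moreover have "d * a - (- b) * (- c) \<noteq> 0" using pq(3) by (simp add: algebra_simps)
    ultimately show "(q, p) \<in> mobius_equiv n" unfolding mobius_equiv_def using pq(1,2) by blast
  qed
  show "trans (mobius_equiv n)"
  proof (rule transI)
    fix p q r assume "(p, q) \<in> mobius_equiv n" "(q, r) \<in> mobius_equiv n"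
    then obtain a b c d l a' b' c' d' l' where pq: "p \<in> conf n" "a * d - b * c \<noteq> 0"
      "\<forall>i\<in>{1..n}. l i \<noteq> 0 \<and> q i = (l i * (a * fst (p i) + b * snd (p i)), l i * (c * fst (p i) + d * snd (p i)))"
      and qr: "r \<in> conf n" "a' * d' - b' * c' \<noteq> 0"
      "\<forall>i\<in>{1..n}. l' i \<noteq> 0 \<and> r i = (l' i * (a' * fst (q i) + b' * snd (q i)), l' i * (c' * fst (q i) + d' * snd (q i)))"
      unfolding mobius_equiv_def by blast
    have "(a' * a + b' * c) * (c' * b + d' * d) - (a' * b + b' * d) * (c' * a + d' * c) =
        (a' * d' - b' * c') * (a * d - b * c)"
      by (simp add: algebra_simps)
    then have "(a' * a + b' * c) * (c' * b + d' * d) - (a' * b + b' * d) * (c' * a + d' * c) \<noteq> 0"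
      using pq(2) qr(2) by simp
    moreover define l'' where "l'' = (\<lambda>i. l' i * l i)"
    have "\<forall>i\<in>{1..n}. l'' i \<noteq> 0 \<and>
        r i = (l'' i * ((a' * a + b' * c) * fst (p i) + (a' * b + b' * d) * snd (p i)),
               l'' i * ((c' * a + d' * c) * fst (p i) + (c' * b + d' * d) * snd (p i)))"
      using pq(3) qr(3) by (auto simp: l''_def algebra_simps)
    ultimately show "(p, r) \<in> mobius_equiv n" unfolding mobius_equiv_def using pq(1) qr(1) by blast
  qed
qed

lemma mobius_pt_nonzero:
  assumes "a * d - b * c \<noteq> 0" "x \<noteq> (0, 0)"
  shows "mobius_pt a b c d x \<noteq> (0, 0)"
proof
  assume "mobius_pt a b c d x = (0, 0)"
  then have "a * fst x + b * snd x = 0" "c * fst x + d * snd x = 0"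
    by (simp_all add: mobius_pt_def)
  moreover have "(a * d - b * c) * fst x = d * (a * fst x + b * snd x) - b * (c * fst x + d * snd x)"
    "(a * d - b * c) * snd x = a * (c * fst x + d * snd x) - c * (a * fst x + b * snd x)"
    by (simp_all add: algebra_simps)
  ultimately show False using assms by (auto simp: prod_eq_iff)
qed

lemma normalizing_mobius:
  assumes "det2 P1 P2 \<noteq> 0" "det2 P1 P3 \<noteq> 0" "det2 P2 P3 \<noteq> 0"
  obtains a b c d where "a * d - b * c \<noteq> 0" "det2 (mobius_pt a b c d P1) (1, 0) = 0"
    "det2 (mobius_pt a b c d P2) (0, 1) = 0" "det2 (mobius_pt a b c d P3) (1, 1) = 0"
proof -
  define a where "a = - det2 P1 P3 * snd P2"
  define b where "b = det2 P1 P3 * fst P2"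
  define c where "c = - det2 P2 P3 * snd P1"
  define d where "d = det2 P2 P3 * fst P1"
  have "a * d - b * c = det2 P1 P3 * det2 P2 P3 * det2 P2 P1"
    by (simp add: a_def b_def c_def d_def det2_def algebra_simps)
  then have "a * d - b * c \<noteq> 0" using assms det2_swap[of P2 P1] by auto
  moreover have "det2 (mobius_pt a b c d P1) (1, 0) = 0" "det2 (mobius_pt a b c d P2) (0, 1) = 0"
    "det2 (mobius_pt a b c d P3) (1, 1) = 0"
    by (simp_all add: mobius_pt_def det2_def a_def b_def c_def d_def algebra_simps)
  ultimately show ?thesis using that by blast
qed

definition cr_num :: "(nat \<Rightarrow> complex \<times> complex) \<Rightarrow> nat \<Rightarrow> nat \<Rightarrow> nat \<Rightarrow> nat \<Rightarrow> complex" where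
  "cr_num q a1 a2 a3 a4 = det2 (q a1) (q a2) * det2 (q a3) (q a4)"

definition cr_den :: "(nat \<Rightarrow> complex \<times> complex) \<Rightarrow> nat \<Rightarrow> nat \<Rightarrow> nat \<Rightarrow> nat \<Rightarrow> complex" where
  "cr_den q a1 a2 a3 a4 = det2 (q a1) (q a3) * det2 (q a2) (q a4)"

lemma cr_set_eq:
  "sorted_list_of_set S = [a1, a2, a3, a4] \<Longrightarrow> cr_set p S = cr_num p a1 a2 a3 a4 / cr_den p a1 a2 a3 a4"
  by (simp add: cr_set_def crossratio_def cr_num_def cr_den_def)

lemma cr_set_mobius_pt:
  assumes "a * d - b * c \<noteq> 0"
  shows "cr_set (\<lambda>i. mobius_pt a b c d (p i)) S = cr_set p S"
  using assms by (auto simp: cr_set_def crossratio_def det2_mobius_pt split: list.splits)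

lemma sorted_list_of_set_card4:
  assumes "finite S" "card S = 4"
  obtains a1 a2 a3 a4 where "sorted_list_of_set S = [a1, a2, a3, a4]" "a1 < a2" "a2 < a3" "a3 < a4" "S = {a1, a2, a3, a4}"
proof -
  define xs where "xs = sorted_list_of_set S"
  have "length xs = 4" "sorted_wrt (<) xs" "set xs = S"
    using assms by (simp_all add: xs_def)
  then show ?thesis using that unfolding xs_def[symmetric]
    by (auto simp: numeral_eq_Suc length_Suc_conv)
qed

lemma sorted_list_of_set_card3:
  assumes "finite S" "card S = 3"
  obtains a1 a2 a3 where "sorted_list_of_set S = [a1, a2, a3]" "a1 < a2" "a2 < a3" "S = {a1, a2, a3}"
proof -
  define xs where "xs = sorted_list_of_set S"
  have "length xs = 3" "sorted_wrt (<) xs" "set xs = S"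
    using assms by (simp_all add: xs_def)
  then show ?thesis using that unfolding xs_def[symmetric]
    by (auto simp: numeral_eq_Suc length_Suc_conv)
qed

text \<open>The point at label z for which the cross-ratio of q on the four labels S becomes c,
  computed from the other three points: the identity cr_num = c * cr_den is linear in q z.\<close>

definition cr_solve :: "complex \<Rightarrow> nat set \<Rightarrow> (nat \<Rightarrow> complex \<times> complex) \<Rightarrow> nat \<Rightarrow> complex \<times> complex" where
  "cr_solve c S q z = (case sorted_list_of_set S of [a1, a2, a3, a4] \<Rightarrow>
     (if z = a4 then lincomb (det2 (q a1) (q a2)) (q a3) (- c * det2 (q a1) (q a3)) (q a2)
      else if z = a3 then lincomb (det2 (q a1) (q a2)) (q a4) (c * det2 (q a2) (q a4)) (q a1)
      else if z = a2 then lincomb (det2 (q a3) (q a4)) (q a1) (c * det2 (q a1) (q a3)) (q a4)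
      else lincomb (det2 (q a3) (q a4)) (q a2) (- c * det2 (q a2) (q a4)) (q a3))
   | _ \<Rightarrow> (0, 0))"

lemma cr_solve_eq: "sorted_list_of_set S = [a1, a2, a3, a4] \<Longrightarrow> cr_solve c S q z =
     (if z = a4 then lincomb (det2 (q a1) (q a2)) (q a3) (- c * det2 (q a1) (q a3)) (q a2)
      else if z = a3 then lincomb (det2 (q a1) (q a2)) (q a4) (c * det2 (q a2) (q a4)) (q a1)
      else if z = a2 then lincomb (det2 (q a3) (q a4)) (q a1) (c * det2 (q a1) (q a3)) (q a4)
      else lincomb (det2 (q a3) (q a4)) (q a2) (- c * det2 (q a2) (q a4)) (q a3))"
  by (simp add: cr_solve_def)

lemma cr_num_cr_den_cr_solve:
  assumes "sorted_list_of_set S = [a1, a2, a3, a4]" "z \<in> {a1, a2, a3, a4}" "a1 < a2" "a2 < a3" "a3 < a4"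
  shows "cr_num q a1 a2 a3 a4 - c * cr_den q a1 a2 a3 a4 =
    (if z = a4 \<or> z = a2 then 1 else -1) * det2 (cr_solve c S q z) (q z)"
  using assms(2-5) unfolding cr_solve_eq[OF assms(1)]
  by (auto simp: cr_num_def cr_den_def lincomb_def det2_def algebra_simps)

lemma cr_solve_cong:
  assumes "sorted_list_of_set S = [a1, a2, a3, a4]" "z \<in> {a1, a2, a3, a4}" "a1 < a2" "a2 < a3" "a3 < a4"
    "\<forall>a\<in>{a1, a2, a3, a4} - {z}. q a = q' a"
  shows "cr_solve c S q z = cr_solve c S q' z"
  using assms(2-6) unfolding cr_solve_eq[OF assms(1)] by auto

lemma cr_set_cong:
  assumes "finite S" "card S = 4" "\<forall>a\<in>S. p a = p' a"
  shows "cr_set p S = cr_set p' S"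
proof -
  obtain a1 a2 a3 a4 where S: "sorted_list_of_set S = [a1, a2, a3, a4]" "S = {a1, a2, a3, a4}"
    using sorted_list_of_set_card4[OF assms(1,2)] by metis
  show ?thesis unfolding cr_set_eq[OF S(1)] using assms(3) S(2) by (simp add: cr_num_def cr_den_def)
qed

lemma cr_solve_scale_pt:
  assumes "sorted_list_of_set S = [a1, a2, a3, a4]" "z \<in> {a1, a2, a3, a4}" "a1 < a2" "a2 < a3" "a3 < a4"
    "\<forall>a\<in>{a1, a2, a3, a4} - {z}. l a \<noteq> 0 \<and> q a = scale_pt (l a) (P a)"
  shows "\<exists>\<Lambda>. \<Lambda> \<noteq> 0 \<and> cr_solve c S q z = scale_pt \<Lambda> (cr_solve c S P z)"
proof -
  consider "z = a4" | "z = a3" | "z = a2" | "z = a1" using assms(2) by auto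
  then show ?thesis
  proof cases
    case 1
    then show ?thesis using assms(3-6) unfolding cr_solve_eq[OF assms(1)]
      by (intro exI[of _ "l a1 * l a2 * l a3"]) (auto simp: lincomb_def scale_pt_def det2_def algebra_simps)
  next
    case 2
    then show ?thesis using assms(3-6) unfolding cr_solve_eq[OF assms(1)]
      by (intro exI[of _ "l a1 * l a2 * l a4"]) (auto simp: lincomb_def scale_pt_def det2_def algebra_simps)
  next
    case 3
    then show ?thesis using assms(3-6) unfolding cr_solve_eq[OF assms(1)]
      by (intro exI[of _ "l a1 * l a3 * l a4"]) (auto simp: lincomb_def scale_pt_def det2_def algebra_simps)
  next
    case 4
    then show ?thesis using assms(3-6) unfolding cr_solve_eq[OF assms(1)]
      by (intro exI[of _ "l a2 * l a3 * l a4"]) (auto simp: lincomb_def scale_pt_def det2_def algebra_simps)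
  qed
qed

text \<open>Pairing the solved point with a suitable neighbour gives a product of two nonzero
  determinants.\<close>

lemma cr_solve_nonzero:
  assumes "sorted_list_of_set S = [a1, a2, a3, a4]" "z \<in> {a1, a2, a3, a4}" "a1 < a2" "a2 < a3" "a3 < a4"
    "\<forall>a\<in>{a1, a2, a3, a4}. \<forall>b\<in>{a1, a2, a3, a4}. a \<noteq> b \<longrightarrow> det2 (P a) (P b) \<noteq> 0"
  shows "cr_solve c S P z \<noteq> (0, 0)"
proof -
  consider "z = a4" | "z = a3" | "z = a2" | "z = a1" using assms(2) by auto
  then obtain u where "det2 u (cr_solve c S P z) \<noteq> 0"
  proof cases
    case 1
    have "det2 (P a2) (cr_solve c S P z) = det2 (P a1) (P a2) * det2 (P a2) (P a3)"
      unfolding cr_solve_eq[OF assms(1)] using 1 by (simp add: det2_lincomb det2_self)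
    then show ?thesis using that[of "P a2"] assms(3-6) by auto
  next
    case 2
    have "det2 (P a1) (cr_solve c S P z) = det2 (P a1) (P a2) * det2 (P a1) (P a4)"
      unfolding cr_solve_eq[OF assms(1)] using 2 assms(5) by (simp add: det2_lincomb det2_self)
    then show ?thesis using that[of "P a1"] assms(3-6) by auto
  next
    case 3
    have "det2 (P a4) (cr_solve c S P z) = det2 (P a3) (P a4) * det2 (P a4) (P a1)"
      unfolding cr_solve_eq[OF assms(1)] using 3 assms(3-5) by (simp add: det2_lincomb det2_self)
    then show ?thesis using that[of "P a4"] assms(3-6) by auto
  next
    case 4
    have "det2 (P a3) (cr_solve c S P z) = det2 (P a3) (P a4) * det2 (P a3) (P a2)"
      unfolding cr_solve_eq[OF assms(1)] using 4 assms(3-5) by (simp add: det2_lincomb det2_self)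
    then show ?thesis using that[of "P a3"] assms(3-6) by auto
  qed
  then show ?thesis using det2_zero_right by metis
qed

lemma cr_solve_proportional:
  assumes S: "sorted_list_of_set S = [a1, a2, a3, a4]" "z \<in> {a1, a2, a3, a4}" "a1 < a2" "a2 < a3" "a3 < a4"
    and P: "\<forall>a\<in>{a1, a2, a3, a4}. \<forall>b\<in>{a1, a2, a3, a4}. a \<noteq> b \<longrightarrow> det2 (P a) (P b) \<noteq> 0"
      "cr_num P a1 a2 a3 a4 = c * cr_den P a1 a2 a3 a4"
    and q: "\<forall>a\<in>{a1, a2, a3, a4} - {z}. l a \<noteq> 0 \<and> q a = scale_pt (l a) (P a)"
  shows "det2 (P z) (cr_solve c S q z) = 0" "cr_solve c S q z \<noteq> (0, 0)"
proof -
  obtain \<Lambda> where \<Lambda>: "\<Lambda> \<noteq> 0" "cr_solve c S q z = scale_pt \<Lambda> (cr_solve c S P z)"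
    using cr_solve_scale_pt[OF S q] by blast
  have "det2 (cr_solve c S P z) (P z) = 0"
    using cr_num_cr_den_cr_solve[OF S, of P c] P(2) by (auto split: if_splits)
  then show "det2 (P z) (cr_solve c S q z) = 0"
    unfolding \<Lambda>(2) det2_scale_pt_right by (metis det2_swap minus_zero mult_zero_right)
  show "cr_solve c S q z \<noteq> (0, 0)"
    unfolding \<Lambda>(2) using \<Lambda>(1) cr_solve_nonzero[OF S P(1)] by (rule scale_pt_nonzero)
qed

lemma cr_set_if_cr_solve:
  assumes S: "sorted_list_of_set S = [a1, a2, a3, a4]" "z \<in> {a1, a2, a3, a4}" "a1 < a2" "a2 < a3" "a3 < a4"
    and "X z = cr_solve c S X z" "cr_den X a1 a2 a3 a4 \<noteq> 0"
  shows "cr_set X S = c"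
proof -
  have "det2 (cr_solve c S X z) (X z) = 0" using assms(6) det2_self by metis
  then have "cr_num X a1 a2 a3 a4 = c * cr_den X a1 a2 a3 a4"
    using cr_num_cr_den_cr_solve[OF S, of X c] by (auto split: if_splits)
  then show ?thesis using assms(7) cr_set_eq[OF S(1)] by simp
qed

lemma mobius_pt_conf:
  assumes "p \<in> conf n" "a * d - b * c \<noteq> 0"
  shows "(\<lambda>i. mobius_pt a b c d (p i)) \<in> conf n"
  using assms mobius_pt_nonzero by (auto simp: conf_def det2_mobius_pt)

definition start_labels :: "nat \<Rightarrow> (nat \<times> nat) list \<Rightarrow> nat set" where
  "start_labels n L = S_D n (L!0) - {Max (S_D n (L!0))}"

definition known_labels :: "nat \<Rightarrow> (nat \<times> nat) list \<Rightarrow> nat \<Rightarrow> nat set" where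
  "known_labels n L k = start_labels n L \<union> (\<Union>j\<in>{..<k}. S_D n (L!j))"

definition new_label :: "nat \<Rightarrow> (nat \<times> nat) list \<Rightarrow> nat \<Rightarrow> nat" where
  "new_label n L k = the_elem (S_D n (L!k) - known_labels n L k)"

definition start_frame :: "nat \<Rightarrow> (nat \<times> nat) list \<Rightarrow> nat \<Rightarrow> complex \<times> complex" where
  "start_frame n L i = (case sorted_list_of_set (start_labels n L) of [i1, i2, i3] \<Rightarrow>
     (if i = i1 then (1, 0) else if i = i2 then (0, 1) else if i = i3 then (1, 1) else (0, 0))
   | _ \<Rightarrow> (0, 0))"

primrec rebuild :: "nat \<Rightarrow> (nat \<times> nat) list \<Rightarrow> (nat \<times> nat \<Rightarrow> complex) \<Rightarrow> nat \<Rightarrow> nat \<Rightarrow> complex \<times> complex" where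
  "rebuild n L y 0 = start_frame n L"
| "rebuild n L y (Suc k) = (rebuild n L y k)(new_label n L k :=
     cr_solve (y (L!k)) (S_D n (L!k)) (rebuild n L y k) (new_label n L k))"

lemma known_labels_0: "known_labels n L 0 = start_labels n L"
  by (simp add: known_labels_def)

lemma known_labels_Suc: "known_labels n L (Suc k) = known_labels n L k \<union> S_D n (L!k)"
  by (auto simp: known_labels_def lessThan_Suc)

lemma known_labels_mono: "k \<le> k' \<Longrightarrow> known_labels n L k \<subseteq> known_labels n L k'"
  by (auto simp: known_labels_def)

text \<open>L lists T so that each diagonal after the first meets exactly one label not met
  before; start_labels are three labels of the first diagonal, whose points get normalized.\<close>

locale reconstruction_order =
  fixes n :: nat and T :: "(nat \<times> nat) set" and L :: "(nat \<times> nat) list"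
  assumes set_L: "set L = T"
    and S_D_T: "\<forall>D\<in>T. card (S_D n D) = 4 \<and> S_D n D \<subseteq> {1..n}"
    and one_new_label: "\<forall>k<length L. card (S_D n (L!k) - known_labels n L k) = 1"
    and known_all: "known_labels n L (length L) = {1..n}"
    and card_start_labels: "card (start_labels n L) = 3"
    and start_labels_range: "start_labels n L \<subseteq> {1..n}"
begin

abbreviation m :: nat where "m \<equiv> length L"

lemma finite_T: "finite T"
  using set_L by auto

lemma S_D_L:
  assumes "k < m"
  shows "card (S_D n (L!k)) = 4" "S_D n (L!k) \<subseteq> {1..n}" "finite (S_D n (L!k))"
  using S_D_T set_L nth_mem[OF assms] by (auto simp: S_D_def split: prod.splits)

lemma S_D_L_sorted:
  assumes "k < m"
  obtains a1 a2 a3 a4 where "sorted_list_of_set (S_D n (L!k)) = [a1, a2, a3, a4]"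
    "a1 < a2" "a2 < a3" "a3 < a4" "S_D n (L!k) = {a1, a2, a3, a4}"
  using sorted_list_of_set_card4[OF S_D_L(3,1)[OF assms]] by metis

lemma new_label:
  assumes "k < m"
  shows "new_label n L k \<in> S_D n (L!k)" "new_label n L k \<notin> known_labels n L k"
    "S_D n (L!k) - {new_label n L k} \<subseteq> known_labels n L k"
    "known_labels n L (Suc k) = insert (new_label n L k) (known_labels n L k)"
proof -
  obtain x where x: "S_D n (L!k) - known_labels n L k = {x}"
    using one_new_label assms card_1_singletonE by blast
  then have "new_label n L k = x" by (simp add: new_label_def)
  then show "new_label n L k \<in> S_D n (L!k)" "new_label n L k \<notin> known_labels n L k"
    "S_D n (L!k) - {new_label n L k} \<subseteq> known_labels n L k"
    "known_labels n L (Suc k) = insert (new_label n L k) (known_labels n L k)"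
    using x by (auto simp: known_labels_Suc)
qed

lemma rebuild_stable:
  "k \<le> k' \<Longrightarrow> k' \<le> m \<Longrightarrow> i \<in> known_labels n L k \<Longrightarrow> rebuild n L y k' i = rebuild n L y k i"
proof (induction k')
  case (Suc k')
  show ?case
  proof (cases "k = Suc k'")
    case False
    then have "k \<le> k'" using Suc by simp
    moreover have "i \<noteq> new_label n L k'"
      using new_label(2)[of k'] known_labels_mono[OF \<open>k \<le> k'\<close>] Suc by auto
    ultimately show ?thesis using Suc by simp
  qed simp
qed simp

lemma start_labels_sorted:
  obtains i1 i2 i3 where "sorted_list_of_set (start_labels n L) = [i1, i2, i3]"
    "i1 < i2" "i2 < i3" "start_labels n L = {i1, i2, i3}"
  using sorted_list_of_set_card3[OF finite_subset[OF start_labels_range] card_start_labels] by auto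

lemma other_label:
  assumes "i \<in> {1..n}"
  obtains j where "j \<in> {1..n}" "j \<noteq> i"
proof -
  obtain i1 i2 i3 where "i1 < i2" "start_labels n L = {i1, i2, i3}" using start_labels_sorted by metis
  then show ?thesis using that[of i1] that[of i2] start_labels_range by (cases "i = i1") auto
qed

lemma rebuild_proportional:
  assumes p: "p \<in> conf n" "\<forall>D\<in>T. cr_set p (S_D n D) = y D"
    and start: "\<forall>i\<in>start_labels n L. det2 (p i) (start_frame n L i) = 0"
    and "k \<le> m"
  shows "\<forall>i\<in>known_labels n L k. det2 (p i) (rebuild n L y k i) = 0 \<and> rebuild n L y k i \<noteq> (0, 0)"
  using \<open>k \<le> m\<close>
proof (induction k)
  case 0
  obtain i1 i2 i3 where "sorted_list_of_set (start_labels n L) = [i1, i2, i3]"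
    "i1 < i2" "i2 < i3" "start_labels n L = {i1, i2, i3}" using start_labels_sorted by metis
  then have "\<forall>i\<in>start_labels n L. start_frame n L i \<noteq> (0, 0)" by (auto simp: start_frame_def)
  then show ?case using start by (simp add: known_labels_0)
next
  case (Suc k)
  then have k: "k < m" by simp
  note IH = Suc.IH[OF less_imp_le[OF k]]
  define z where "z = new_label n L k"
  note z = new_label[OF k, folded z_def]
  obtain a1 a2 a3 a4 where S: "sorted_list_of_set (S_D n (L!k)) = [a1, a2, a3, a4]"
    "a1 < a2" "a2 < a3" "a3 < a4" "S_D n (L!k) = {a1, a2, a3, a4}"
    using S_D_L_sorted[OF k] by metis
  have S_range: "{a1, a2, a3, a4} \<subseteq> {1..n}" using S_D_L(2)[OF k] S(5) by auto
  have z_S: "z \<in> {a1, a2, a3, a4}" using z(1) S(5) by simp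
  have p_det: "\<forall>a\<in>{a1, a2, a3, a4}. \<forall>b\<in>{a1, a2, a3, a4}. a \<noteq> b \<longrightarrow> det2 (p a) (p b) \<noteq> 0"
    using p(1) S_range by (auto simp: conf_def)
  have "cr_set p (S_D n (L!k)) = y (L!k)" using p(2) set_L nth_mem[OF k] by auto
  moreover have "cr_den p a1 a2 a3 a4 \<noteq> 0" using p_det S(2-4) by (auto simp: cr_den_def)
  ultimately have p_cr: "cr_num p a1 a2 a3 a4 = y (L!k) * cr_den p a1 a2 a3 a4"
    using cr_set_eq[OF S(1)] by (simp add: field_simps)
  have "\<forall>a\<in>{a1, a2, a3, a4} - {z}. \<exists>l. l \<noteq> 0 \<and> rebuild n L y k a = scale_pt l (p a)"
  proof
    fix a assume a: "a \<in> {a1, a2, a3, a4} - {z}"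
    then have "a \<in> known_labels n L k" using z(3) S(5) by auto
    moreover have "p a \<noteq> (0, 0)" using a S_range p(1) by (auto simp: conf_def)
    ultimately show "\<exists>l. l \<noteq> 0 \<and> rebuild n L y k a = scale_pt l (p a)"
      using IH proportional_if_det2_zero by blast
  qed
  then obtain l where "\<forall>a\<in>{a1, a2, a3, a4} - {z}. l a \<noteq> 0 \<and> rebuild n L y k a = scale_pt (l a) (p a)"
    by metis
  note solved = cr_solve_proportional[OF S(1) z_S S(2-4) p_det p_cr this]
  show ?case
  proof
    fix i assume "i \<in> known_labels n L (Suc k)"
    then consider "i = z" | "i \<noteq> z" "i \<in> known_labels n L k" using z(4) by auto
    then show "det2 (p i) (rebuild n L y (Suc k) i) = 0 \<and> rebuild n L y (Suc k) i \<noteq> (0, 0)"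
      by cases (use solved IH in \<open>simp_all add: z_def\<close>)
  qed
qed

lemma rebuild_unique:
  assumes p: "p \<in> conf n" and cr: "\<forall>D\<in>T. cr_set p (S_D n D) = y D"
  shows "(p, rebuild n L y m) \<in> mobius_equiv n"
proof -
  obtain i1 i2 i3 where I: "sorted_list_of_set (start_labels n L) = [i1, i2, i3]"
    "i1 < i2" "i2 < i3" "start_labels n L = {i1, i2, i3}" using start_labels_sorted by metis
  have "{i1, i2, i3} \<subseteq> {1..n}" using I(4) start_labels_range by simp
  then have "det2 (p i1) (p i2) \<noteq> 0" "det2 (p i1) (p i3) \<noteq> 0" "det2 (p i2) (p i3) \<noteq> 0"
    using p I(2,3) by (auto simp: conf_def)
  then obtain a b c d where M: "a * d - b * c \<noteq> 0" "det2 (mobius_pt a b c d (p i1)) (1, 0) = 0"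
    "det2 (mobius_pt a b c d (p i2)) (0, 1) = 0" "det2 (mobius_pt a b c d (p i3)) (1, 1) = 0"
    by (rule normalizing_mobius)
  define p' where "p' = (\<lambda>i. mobius_pt a b c d (p i))"
  have p': "p' \<in> conf n" "\<forall>D\<in>T. cr_set p' (S_D n D) = y D"
    using mobius_pt_conf[OF p M(1)] cr cr_set_mobius_pt[OF M(1)] by (simp_all add: p'_def)
  have "\<forall>i\<in>start_labels n L. det2 (p' i) (start_frame n L i) = 0"
    using I M(2-4) by (auto simp: start_frame_def p'_def)
  from rebuild_proportional[OF p' this order.refl] known_all
  have "\<forall>i\<in>{1..n}. \<exists>l. l \<noteq> 0 \<and> rebuild n L y m i = scale_pt l (p' i)"
    using p'(1) proportional_if_det2_zero by (auto simp: conf_def)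
  then obtain l where l: "\<forall>i\<in>{1..n}. l i \<noteq> 0 \<and> rebuild n L y m i = scale_pt (l i) (p' i)"
    by metis
  have "rebuild n L y m \<in> conf n"
    using p'(1) l scale_pt_nonzero by (auto simp: conf_def det2_scale_pt)
  moreover have "\<forall>i\<in>{1..n}. l i \<noteq> 0 \<and>
      rebuild n L y m i = (l i * (a * fst (p i) + b * snd (p i)), l i * (c * fst (p i) + d * snd (p i)))"
    using l by (simp add: p'_def scale_pt_def mobius_pt_def)
  ultimately show ?thesis unfolding mobius_equiv_def using p M(1) by blast
qed

lemma cr_set_rebuild:
  assumes k: "k < m"
    and dets: "\<forall>i\<in>{1..n}. \<forall>j\<in>{1..n}. i \<noteq> j \<longrightarrow> det2 (rebuild n L y m i) (rebuild n L y m j) \<noteq> 0"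
  shows "cr_set (rebuild n L y m) (S_D n (L!k)) = y (L!k)"
proof -
  define Q where "Q = rebuild n L y m"
  define z where "z = new_label n L k"
  define X where "X = rebuild n L y (Suc k)"
  obtain a1 a2 a3 a4 where S: "sorted_list_of_set (S_D n (L!k)) = [a1, a2, a3, a4]"
    "a1 < a2" "a2 < a3" "a3 < a4" "S_D n (L!k) = {a1, a2, a3, a4}"
    using S_D_L_sorted[OF k] by metis
  have z_S: "z \<in> {a1, a2, a3, a4}" using new_label(1)[OF k] S(5) by (simp add: z_def)
  have QX: "\<forall>a\<in>S_D n (L!k). Q a = X a"
    using rebuild_stable[of "Suc k" m _ y] k unfolding Q_def X_def known_labels_Suc by simp
  have "X z = cr_solve (y (L!k)) (S_D n (L!k)) (rebuild n L y k) z"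
    by (simp add: X_def z_def)
  also have "\<dots> = cr_solve (y (L!k)) (S_D n (L!k)) X z"
    by (rule cr_solve_cong[OF S(1) z_S S(2-4)]) (simp add: X_def z_def)
  finally have Xz: "X z = cr_solve (y (L!k)) (S_D n (L!k)) X z" .
  have "{a1, a2, a3, a4} \<subseteq> {1..n}" using S_D_L(2)[OF k] S(5) by simp
  then have "det2 (Q a1) (Q a3) \<noteq> 0" "det2 (Q a2) (Q a4) \<noteq> 0"
    using dets S(2-4) unfolding Q_def by simp_all
  then have "cr_den X a1 a2 a3 a4 \<noteq> 0"
    using QX S(5) by (simp add: cr_den_def)
  then have "cr_set X (S_D n (L!k)) = y (L!k)" by (rule cr_set_if_cr_solve[OF S(1) z_S S(2-4) Xz])
  moreover have "cr_set Q (S_D n (L!k)) = cr_set X (S_D n (L!k))"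
    using cr_set_cong S_D_L[OF k] QX by blast
  ultimately show ?thesis by (simp add: Q_def)
qed

lemma rebuild_solution:
  assumes y: "y \<in> target T"
    and dets: "\<forall>i\<in>{1..n}. \<forall>j\<in>{1..n}. i \<noteq> j \<longrightarrow> det2 (rebuild n L y m i) (rebuild n L y m j) \<noteq> 0"
  shows "rebuild n L y m \<in> conf n" "piT n T (rebuild n L y m) = y"
proof -
  have "rebuild n L y m i \<noteq> (0, 0)" if i: "i \<in> {1..n}" for i
  proof -
    obtain j where "j \<in> {1..n}" "j \<noteq> i" using other_label[OF i] by metis
    then have "det2 (rebuild n L y m i) (rebuild n L y m j) \<noteq> 0" using dets i by simp
    then show ?thesis by (rule nonzero_if_det2_nonzero)
  qed
  then show "rebuild n L y m \<in> conf n" using dets by (simp add: conf_def)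
  show "piT n T (rebuild n L y m) = y"
  proof
    fix D
    show "piT n T (rebuild n L y m) D = y D"
    proof (cases "D \<in> T")
      case True
      then obtain k where "k < m" "L!k = D" using set_L by (metis in_set_conv_nth)
      then show ?thesis using cr_set_rebuild[OF _ dets] True by (auto simp: piT_def)
    next
      case False
      then show ?thesis using y by (cases D) (simp add: piT_def target_def)
    qed
  qed
qed

end

lemma polyfun_neg: "f \<in> polyfun \<Longrightarrow> (\<lambda>y. - f y) \<in> polyfun"
  using polyfun.pf_mult[OF polyfun.pf_const[of "-1"]] by simp

lemma polyfun_diff: "f \<in> polyfun \<Longrightarrow> g \<in> polyfun \<Longrightarrow> (\<lambda>y. f y - g y) \<in> polyfun"
  using polyfun.pf_add[OF _ polyfun_neg] by simp

lemma polyfun_prod: "finite A \<Longrightarrow> \<forall>a\<in>A. g a \<in> polyfun \<Longrightarrow> (\<lambda>y. \<Prod>a\<in>A. g a y) \<in> polyfun"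
  by (induction A rule: finite_induct) (simp_all add: polyfun.pf_const polyfun.pf_mult)

definition polyfun_pt :: "(('i \<Rightarrow> complex) \<Rightarrow> complex \<times> complex) \<Rightarrow> bool" where
  "polyfun_pt F = ((\<lambda>y. fst (F y)) \<in> polyfun \<and> (\<lambda>y. snd (F y)) \<in> polyfun)"

lemma polyfun_det2: "polyfun_pt F \<Longrightarrow> polyfun_pt G \<Longrightarrow> (\<lambda>y. det2 (F y) (G y)) \<in> polyfun"
  unfolding polyfun_pt_def det2_def by (intro polyfun_diff polyfun.pf_mult) auto

lemma polyfun_pt_lincomb:
  "A \<in> polyfun \<Longrightarrow> polyfun_pt F \<Longrightarrow> B \<in> polyfun \<Longrightarrow> polyfun_pt G \<Longrightarrow>
    polyfun_pt (\<lambda>y. lincomb (A y) (F y) (B y) (G y))"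
  unfolding polyfun_pt_def lincomb_def by (simp add: polyfun.pf_add polyfun.pf_mult)

lemma polyfun_pt_const: "polyfun_pt (\<lambda>y. c)"
  by (simp add: polyfun_pt_def polyfun.pf_const)

lemma polyfun_pt_if: "polyfun_pt F \<Longrightarrow> polyfun_pt G \<Longrightarrow> polyfun_pt (\<lambda>y. if P then F y else G y)"
  by (cases P) simp_all

lemma polyfun_pt_cr_solve:
  assumes "\<And>i. polyfun_pt (\<lambda>y. q y i)"
  shows "polyfun_pt (\<lambda>y. cr_solve (y D) S (q y) z)"
proof (cases "\<exists>a1 a2 a3 a4. sorted_list_of_set S = [a1, a2, a3, a4]")
  case True
  then obtain a1 a2 a3 a4 where S: "sorted_list_of_set S = [a1, a2, a3, a4]" by blast
  note det = polyfun_det2[OF assms assms]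
  show ?thesis unfolding cr_solve_eq[OF S]
    by (intro polyfun_pt_if polyfun_pt_lincomb polyfun.pf_mult polyfun.pf_var polyfun_neg det assms)
next
  case False
  then have "cr_solve c S q z = (0, 0)" for c q by (auto simp: cr_solve_def split: list.splits)
  then show ?thesis by (simp add: polyfun_pt_const)
qed

lemma polyfun_pt_rebuild: "polyfun_pt (\<lambda>y. rebuild n L y k i)"
proof (induction k arbitrary: i)
  case 0
  then show ?case by (simp add: polyfun_pt_const)
next
  case (Suc k)
  show ?case
  proof (cases "i = new_label n L k")
    case True
    then show ?thesis using polyfun_pt_cr_solve[of "\<lambda>y i. rebuild n L y k i", OF Suc.IH] by simp
  qed (simp add: Suc.IH)
qed

definition rebuild_discriminant :: "nat \<Rightarrow> (nat \<times> nat) list \<Rightarrow> (nat \<times> nat \<Rightarrow> complex) \<Rightarrow> complex" where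
  "rebuild_discriminant n L y = (\<Prod>ij\<in>{(i, j). i \<in> {1..n} \<and> j \<in> {1..n} \<and> i \<noteq> j}.
     det2 (rebuild n L y (length L) (fst ij)) (rebuild n L y (length L) (snd ij)))"

lemma finite_label_pairs: "finite {(i, j). i \<in> {1..n} \<and> j \<in> {1..n} \<and> i \<noteq> (j::nat)}"
  by (rule finite_subset[of _ "{1..n} \<times> {1..n}"]) auto

lemma polyfun_rebuild_discriminant: "rebuild_discriminant n L \<in> polyfun"
proof -
  have "(\<lambda>y. rebuild_discriminant n L y) \<in> polyfun"
    unfolding rebuild_discriminant_def
    by (rule polyfun_prod[OF finite_label_pairs]) (auto intro: polyfun_det2 polyfun_pt_rebuild)
  then show ?thesis by simp
qed

lemma rebuild_discriminant_nonzero_iff: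
  "rebuild_discriminant n L y \<noteq> 0 \<longleftrightarrow>
    (\<forall>i\<in>{1..n}. \<forall>j\<in>{1..n}. i \<noteq> j \<longrightarrow> det2 (rebuild n L y (length L) i) (rebuild n L y (length L) j) \<noteq> 0)"
  (is "_ \<longleftrightarrow> ?rhs")
proof -
  have pairs: "(\<forall>ij\<in>{(i, j). i \<in> A \<and> j \<in> A \<and> i \<noteq> j}. R (fst ij) (snd ij)) \<longleftrightarrow>
      (\<forall>i\<in>A. \<forall>j\<in>A. i \<noteq> j \<longrightarrow> R i j)" for A :: "nat set" and R
    by auto
  have "rebuild_discriminant n L y \<noteq> 0 \<longleftrightarrow> (\<forall>ij\<in>{(i, j). i \<in> {1..n} \<and> j \<in> {1..n} \<and> i \<noteq> j}.
      det2 (rebuild n L y (length L) (fst ij)) (rebuild n L y (length L) (snd ij)) \<noteq> 0)"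
    unfolding rebuild_discriminant_def prod_zero_iff[OF finite_label_pairs] by blast
  also have "\<dots> \<longleftrightarrow> ?rhs" by (rule pairs)
  finally show ?thesis .
qed

lemma polyfun_on_line:
  assumes "f \<in> polyfun"
  shows "\<exists>P. \<forall>t. f (\<lambda>D. y1 D + t * (y2 D - y1 D)) = poly P t"
  using assms
proof (induction rule: polyfun.induct)
  case (pf_const c)
  then show ?case by (intro exI[of _ "[:c:]"]) simp
next
  case (pf_var i)
  then show ?case by (intro exI[of _ "[:y1 i, y2 i - y1 i:]"]) (simp add: algebra_simps)
next
  case (pf_add f g)
  then obtain P Q where "\<forall>t. f (\<lambda>D. y1 D + t * (y2 D - y1 D)) = poly P t"
    "\<forall>t. g (\<lambda>D. y1 D + t * (y2 D - y1 D)) = poly Q t" by blast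
  then show ?case by (intro exI[of _ "P + Q"]) simp
next
  case (pf_mult f g)
  then obtain P Q where "\<forall>t. f (\<lambda>D. y1 D + t * (y2 D - y1 D)) = poly P t"
    "\<forall>t. g (\<lambda>D. y1 D + t * (y2 D - y1 D)) = poly Q t" by blast
  then show ?case by (intro exI[of _ "P * Q"]) simp
qed

lemma line_in_target:
  assumes "finite T" "y1 \<in> target T" "y2 \<in> target T"
  shows "\<exists>B. finite B \<and> (\<forall>t. t \<notin> B \<longrightarrow> (\<lambda>D. y1 D + t * (y2 D - y1 D)) \<in> target T)"
proof (intro exI conjI allI impI)
  let ?B = "\<Union>D\<in>T. {- y1 D / (y2 D - y1 D), (1 - y1 D) / (y2 D - y1 D)}"
  show "finite ?B" using assms(1) by auto
  fix t assume t: "t \<notin> ?B"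
  show "(\<lambda>D. y1 D + t * (y2 D - y1 D)) \<in> target T"
    unfolding target_def
  proof (intro CollectI conjI ballI allI impI)
    fix D assume D: "D \<in> T"
    have y1: "y1 D \<noteq> 0" "y1 D \<noteq> 1" using assms(2) D by (auto simp: target_def)
    have avoid: "t \<noteq> - y1 D / (y2 D - y1 D)" "t \<noteq> (1 - y1 D) / (y2 D - y1 D)" using t D by auto
    have "y1 D + t * (y2 D - y1 D) \<noteq> c" if "c \<in> {0, 1}" for c
    proof (cases "y2 D = y1 D")
      case False
      show ?thesis
      proof
        assume "y1 D + t * (y2 D - y1 D) = c"
        then have "t = (c - y1 D) / (y2 D - y1 D)" using False by (simp add: field_simps)
        then show False using avoid that by auto
      qed
    qed (use y1 that in auto)
    then show "y1 D + t * (y2 D - y1 D) \<noteq> 0" "y1 D + t * (y2 D - y1 D) \<noteq> 1" by auto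
  next
    fix D assume "D \<notin> T"
    then show "y1 D + t * (y2 D - y1 D) = 0" using assms(2,3) by (cases D) (simp add: target_def)
  qed
qed

text \<open>The target is irreducible: two polynomials that do not vanish identically on it have a
  common non-zero there. Restricting both to a line through witnesses reduces this to the
  finiteness of the roots of a nonzero univariate polynomial.\<close>

lemma common_nonzero_in_target:
  assumes T: "finite T" and f: "f \<in> polyfun" and g: "g \<in> polyfun"
    and y1: "y1 \<in> target T" "f y1 \<noteq> 0" and y2: "y2 \<in> target T" "g y2 \<noteq> 0"
  shows "\<exists>y\<in>target T. f y \<noteq> 0 \<and> g y \<noteq> 0"
proof -
  define l where "l = (\<lambda>t::complex. \<lambda>D. y1 D + t * (y2 D - y1 D))"
  obtain P where P: "\<forall>t. f (l t) = poly P t" using polyfun_on_line[OF f] unfolding l_def by blast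
  obtain Q where Q: "\<forall>t. g (l t) = poly Q t" using polyfun_on_line[OF g] unfolding l_def by blast
  have "l 0 = y1" "l 1 = y2" by (auto simp: l_def)
  then have P0: "P \<noteq> 0" and Q0: "Q \<noteq> 0" using P Q y1(2) y2(2) by (metis poly_0)+
  obtain B where B: "finite B" "\<forall>t. t \<notin> B \<longrightarrow> l t \<in> target T"
    using line_in_target[OF T y1(1) y2(1)] unfolding l_def by blast
  define bad where "bad = {t. poly P t = 0} \<union> {t. poly Q t = 0} \<union> B"
  have "finite bad" unfolding bad_def using poly_roots_finite[OF P0] poly_roots_finite[OF Q0] B(1) by auto
  then obtain t where "t \<notin> bad" using ex_new_if_finite[OF infinite_UNIV_char_0] by blast
  then have "l t \<in> target T" "f (l t) \<noteq> 0" "g (l t) \<noteq> 0" using B(2) P Q by (auto simp: bad_def)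
  then show ?thesis by blast
qed

definition standard_conf :: "nat \<Rightarrow> complex \<times> complex" where
  "standard_conf i = (of_nat i, 1)"

lemma det2_standard_conf: "det2 (standard_conf a) (standard_conf b) = of_nat a - of_nat b"
  by (simp add: det2_def standard_conf_def)

lemma standard_conf_conf: "standard_conf \<in> conf n"
  by (auto simp: conf_def standard_conf_def det2_def)

lemma cr_set_of_piT: "piT n T p = y \<Longrightarrow> \<forall>D\<in>T. cr_set p (S_D n D) = y D"
  by (auto simp: piT_def)

context reconstruction_order
begin

lemma piT_standard_conf: "piT n T standard_conf \<in> target T"
  unfolding target_def
proof (intro CollectI conjI ballI allI impI)
  fix D assume D: "D \<in> T"
  then have "card (S_D n D) = 4" "finite (S_D n D)" using S_D_T by (auto simp: S_D_def split: prod.splits)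
  then obtain a1 a2 a3 a4 where S: "sorted_list_of_set (S_D n D) = [a1, a2, a3, a4]"
    "a1 < a2" "a2 < a3" "a3 < a4"
    using sorted_list_of_set_card4 by metis
  define A where "A = (\<lambda>i. of_nat i :: complex)"
  have distinct: "A a1 \<noteq> A a2" "A a1 \<noteq> A a3" "A a1 \<noteq> A a4" "A a2 \<noteq> A a3" "A a2 \<noteq> A a4" "A a3 \<noteq> A a4"
    using S(2-4) by (auto simp: A_def)
  have cr: "piT n T standard_conf D = (A a1 - A a2) * (A a3 - A a4) / ((A a1 - A a3) * (A a2 - A a4))"
    using D cr_set_eq[OF S(1)] by (simp add: piT_def cr_num_def cr_den_def det2_standard_conf A_def)
  have "(A a1 - A a3) * (A a2 - A a4) - (A a1 - A a2) * (A a3 - A a4) = (A a1 - A a4) * (A a2 - A a3)"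
    by (simp add: algebra_simps)
  moreover have "(A a1 - A a2) * (A a3 - A a4) \<noteq> 0" "(A a1 - A a3) * (A a2 - A a4) \<noteq> 0"
    "(A a1 - A a4) * (A a2 - A a3) \<noteq> 0" using distinct by auto
  ultimately show "piT n T standard_conf D \<noteq> 0" "piT n T standard_conf D \<noteq> 1"
    unfolding cr by (auto simp: field_simps)
next
  fix D assume "D \<notin> T"
  then show "piT n T standard_conf D = 0" by (simp add: piT_def)
qed

lemma rebuild_discriminant_standard_conf: "rebuild_discriminant n L (piT n T standard_conf) \<noteq> 0"
proof -
  have "(standard_conf, rebuild n L (piT n T standard_conf) m) \<in> mobius_equiv n"
    using rebuild_unique[OF standard_conf_conf cr_set_of_piT[OF refl]] .
  then have "rebuild n L (piT n T standard_conf) m \<in> conf n" by (auto simp: mobius_equiv_def)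
  then show ?thesis unfolding rebuild_discriminant_nonzero_iff by (auto simp: conf_def)
qed

lemma card_fiber:
  assumes y: "y \<in> target T" "rebuild_discriminant n L y \<noteq> 0"
  shows "card (fiber n T y) = 1"
proof -
  define Q where "Q = rebuild n L y m"
  have Q: "Q \<in> conf n" "piT n T Q = y"
    using rebuild_solution[OF y(1)] y(2) unfolding rebuild_discriminant_nonzero_iff Q_def by auto
  note equiv = equiv_mobius_equiv[of n]
  have "fiber n T y = {mobius_equiv n `` {Q}}"
  proof
    have "mobius_equiv n `` {Q} \<in> M0 n" unfolding M0_def using Q(1) by (rule quotientI)
    moreover have "Q \<in> mobius_equiv n `` {Q}" using equiv Q(1) by (auto simp: equiv_def refl_on_def)
    ultimately show "{mobius_equiv n `` {Q}} \<subseteq> fiber n T y" using Q(2) by (auto simp: fiber_def)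
    show "fiber n T y \<subseteq> {mobius_equiv n `` {Q}}"
    proof
      fix C assume C: "C \<in> fiber n T y"
      then obtain p where p: "p \<in> C" "piT n T p = y" by (auto simp: fiber_def)
      from C obtain x where x: "x \<in> conf n" "C = mobius_equiv n `` {x}"
        by (auto simp: fiber_def M0_def elim: quotientE)
      then have xp: "(x, p) \<in> mobius_equiv n" using p by auto
      then have "p \<in> conf n" by (auto simp: mobius_equiv_def)
      then have pQ: "(p, Q) \<in> mobius_equiv n"
        using rebuild_unique cr_set_of_piT[OF p(2)] unfolding Q_def by blast
      have "C = mobius_equiv n `` {p}" using x(2) equiv_class_eq[OF equiv xp] by simp
      also have "\<dots> = mobius_equiv n `` {Q}" using equiv_class_eq[OF equiv pQ] .
      finally show "C \<in> {mobius_equiv n `` {Q}}" by simp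
    qed
  qed
  then show ?thesis by simp
qed

lemma degree_T_eq_1: "degree_T n T = 1"
  unfolding degree_T_def
proof (rule the_equality)
  show "generically T (\<lambda>y. card (fiber n T y) = 1)"
    unfolding generically_def
    using polyfun_rebuild_discriminant piT_standard_conf rebuild_discriminant_standard_conf card_fiber
    by blast
next
  fix d assume "generically T (\<lambda>y. card (fiber n T y) = d)"
  then obtain g y2 where g: "g \<in> polyfun" "y2 \<in> target T" "g y2 \<noteq> 0"
    "\<forall>y\<in>target T. g y \<noteq> 0 \<longrightarrow> card (fiber n T y) = d" unfolding generically_def by blast
  obtain y where "y \<in> target T" "rebuild_discriminant n L y \<noteq> 0" "g y \<noteq> 0"
    using common_nonzero_in_target[OF finite_T polyfun_rebuild_discriminant g(1)
        piT_standard_conf rebuild_discriminant_standard_conf g(2,3)] by blast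
  then show "d = 1" using card_fiber g(4) by auto
qed

end

lemma sum_eq_card_imp_eq_1:
  fixes d :: "'a \<Rightarrow> nat"
  assumes "finite A" "\<forall>a\<in>A. d a \<le> 1" "sum d A = card A" "a \<in> A"
  shows "d a = 1"
proof -
  have "(\<Sum>x\<in>A. 1 - d x) = card A - sum d A" using assms(2) by (simp add: sum_subtractf_nat)
  then have "1 - d a = 0" using assms by (simp add: sum_eq_0_iff)
  then show ?thesis using assms(2,4) by auto
qed

lemma card_known_labels:
  assumes "\<forall>k. finite (S_D n (L!k))" "finite (start_labels n L)"
  shows "card (known_labels n L k) =
    card (start_labels n L) + (\<Sum>j<k. card (S_D n (L!j) - known_labels n L j))"
proof (induction k)
  case 0
  then show ?case by (simp add: known_labels_0)
next
  case (Suc k)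
  have "finite (known_labels n L k)" using assms by (simp add: known_labels_def)
  then have "card (known_labels n L k \<union> (S_D n (L!k) - known_labels n L k)) =
      card (known_labels n L k) + card (S_D n (L!k) - known_labels n L k)"
    using assms(1) by (intro card_Un_disjoint) auto
  moreover have "known_labels n L (Suc k) = known_labels n L k \<union> (S_D n (L!k) - known_labels n L k)"
    by (auto simp: known_labels_Suc)
  ultimately have "card (known_labels n L (Suc k)) =
      card (known_labels n L k) + card (S_D n (L!k) - known_labels n L k)"
    by simp
  then show ?case using Suc by simp
qed

context triangulation_no_inner
begin

text \<open>Along a sharing order, each diagonal brings at most one new label; as the labels of
  all n - 3 diagonals cover all n edges, each brings exactly one.\<close>

lemma reconstruction_order_exists: "\<exists>L. reconstruction_order n T L"
proof -
  obtain L where L: "distinct L" "set L = T"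
    "\<forall>k<length L. 0 < k \<longrightarrow> (\<exists>j<k. 3 \<le> card (S_D n (L!k) \<inter> S_D n (L!j)))"
    using sharing_order_exists by blast
  have len: "length L = n - 3" using L(1,2) card_T distinct_card by fastforce
  have S_D_T: "\<forall>D\<in>T. card (S_D n D) = 4 \<and> S_D n D \<subseteq> {1..n}"
    using card_S_D diagonal_T n_ge_4 by blast
  have fin: "\<forall>k. finite (S_D n (L!k))" by (simp add: S_D_def split: prod.splits)
  have "L!0 \<in> T" using len n_ge_4 L(2) nth_mem by fastforce
  then have L0: "card (S_D n (L!0)) = 4" "S_D n (L!0) \<subseteq> {1..n}" using S_D_T by auto
  then have "S_D n (L!0) \<noteq> {}" by auto
  then have "Max (S_D n (L!0)) \<in> S_D n (L!0)" using fin by simp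
  then have start: "card (start_labels n L) = 3" "start_labels n L \<subseteq> {1..n}"
    using L0 fin by (auto simp: start_labels_def card_Diff_singleton)
  have at_most_one: "card (S_D n (L!k) - known_labels n L k) \<le> 1" if k: "k < length L" for k
  proof (cases "k = 0")
    case True
    have "S_D n (L!0) - start_labels n L \<subseteq> {Max (S_D n (L!0))}" by (auto simp: start_labels_def)
    then show ?thesis using True card_mono[of "{Max (S_D n (L!0))}"] by (simp add: known_labels_0)
  next
    case False
    then obtain j where j: "j < k" "3 \<le> card (S_D n (L!k) \<inter> S_D n (L!j))" using L(3) k by auto
    have "card (S_D n (L!k)) = 4" using S_D_T nth_mem[OF k] L(2) by auto
    then have le1: "card (S_D n (L!k) - S_D n (L!j)) \<le> 1"
      using j(2) fin by (simp add: card_Diff_subset_Int)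
    have "S_D n (L!j) \<subseteq> known_labels n L k" using j(1) by (auto simp: known_labels_def)
    then have "S_D n (L!k) - known_labels n L k \<subseteq> S_D n (L!k) - S_D n (L!j)" by auto
    then show ?thesis using card_mono[OF finite_Diff[OF fin[rule_format]]] le1 le_trans by blast
  qed
  have all: "known_labels n L (length L) = {1..n}"
  proof
    show "known_labels n L (length L) \<subseteq> {1..n}"
      using start S_D_T L(2) by (auto simp: known_labels_def)
    show "{1..n} \<subseteq> known_labels n L (length L)"
      using S_D_cover L(2) by (force simp: known_labels_def in_set_conv_nth)
  qed
  then have "card (known_labels n L (length L)) = 3 + length L" using len n_ge_4 by simp
  then have "(\<Sum>j<length L. card (S_D n (L!j) - known_labels n L j)) = card {..<length L}"
    using card_known_labels[OF fin finite_subset[OF start(2)]] start(1) by simp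
  then have "\<forall>k<length L. card (S_D n (L!k) - known_labels n L k) = 1"
    using sum_eq_card_imp_eq_1[of "{..<length L}" "\<lambda>j. card (S_D n (L!j) - known_labels n L j)"]
      at_most_one by simp
  then have "reconstruction_order n T L" using L(2) S_D_T all start by unfold_locales blast+
  then show ?thesis ..
qed

end

theorem corollary2p4:
  fixes n :: nat and T :: "(nat \<times> nat) set"
  assumes "n \<ge> 4"
    and "is_triangulation n T"
    and "\<forall>(a, b, c) \<in> triangles n T. is_side n a b \<or> is_side n b c \<or> is_side n a c"
  shows "degree_T n T = 1"
proof -
  interpret triangulation_no_inner n T
    using assms by unfold_locales auto
  obtain L where "reconstruction_order n T L" using reconstruction_order_exists by blast
  then interpret reconstruction_order n T L .
  show ?thesis by (rule degree_T_eq_1)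
qed

end
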